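(* Let $\mathscr{R}$ be a von Neumann algebra acting on a Hilbert space $\mathscr{H}$, with identity $I$, and let $n\ge 2$. If $T_1,\dots,T_n$ are operators in $\mathscr{R}$ such that $T_1^*T_1 + \cdots + T_n^*T_n = I$, then there are operators $S_1,\dots,S_{n-1}$ in $\mathscr{R}$ such that $T_i = S_i\sqrt{I - T_n^*T_n}$ for $1\le i\le n-1$ and $S_1^*S_1 + \cdots + S_{n-1}^*S_{n-1}$ is the range projection of $\sqrt{I - T_n^*T_n}$.
   Context: The range projection of an operator is the orthogonal projection onto the closure of its range. *)

theory Defs
  imports "HOL-Analysis.Analysis"
begin

class complex_vector = real_vector +
  fixes scaleC :: "complex \<Rightarrow> 'a \<Rightarrow> 'a"
  assumes scaleC_add_right: "scaleC a (x + y) = scaleC a x + scaleC a y"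
    and scaleC_add_left: "scaleC (a + b) x = scaleC a x + scaleC b x"
    and scaleC_scaleC: "scaleC a (scaleC b x) = scaleC (a * b) x"
    and scaleC_one: "scaleC 1 x = x"
    and scaleR_scaleC: "scaleR r x = scaleC (complex_of_real r) x"

class complex_inner = complex_vector + real_normed_vector +
  fixes cinner :: "'a \<Rightarrow> 'a \<Rightarrow> complex"
  assumes cinner_commute: "cinner x y = cnj (cinner y x)"
    and cinner_add_left: "cinner (x + y) z = cinner x z + cinner y z"
    and cinner_scaleC_left: "cinner (scaleC r x) y = cnj r * cinner x y"
    and cinner_nonneg: "Im (cinner x x) = 0 \<and> 0 \<le> Re (cinner x x)"
    and cinner_eq_zero_iff: "cinner x x = 0 \<longleftrightarrow> x = 0"
    and norm_eq_sqrt_cinner: "norm x = sqrt (Re (cinner x x))"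

class chilbert_space = complex_inner + complete_space

definition bounded_clinear :: "('a::complex_inner \<Rightarrow> 'b::complex_inner) \<Rightarrow> bool" where
  "bounded_clinear T \<longleftrightarrow>
     (\<forall>x y. T (x + y) = T x + T y) \<and> (\<forall>c x. T (scaleC c x) = scaleC c (T x)) \<and>
     (\<exists>K. \<forall>x. norm (T x) \<le> norm x * K)"

definition cadjoint :: "('a::complex_inner \<Rightarrow> 'a) \<Rightarrow> ('a \<Rightarrow> 'a)" where
  "cadjoint T = (SOME S. \<forall>x y. cinner (S x) y = cinner x (T y))"

definition commutant :: "('a::complex_inner \<Rightarrow> 'a) set \<Rightarrow> ('a \<Rightarrow> 'a) set" where
  "commutant S = {T. bounded_clinear T \<and> (\<forall>A\<in>S. T \<circ> A = A \<circ> T)}"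

definition von_neumann_algebra :: "('a::chilbert_space \<Rightarrow> 'a) set \<Rightarrow> bool" where
  "von_neumann_algebra R \<longleftrightarrow>
     R \<subseteq> {T. bounded_clinear T} \<and> id \<in> R \<and>
     (\<forall>A\<in>R. \<forall>B\<in>R. (\<lambda>x. A x + B x) \<in> R \<and> A \<circ> B \<in> R) \<and>
     (\<forall>c. \<forall>A\<in>R. (\<lambda>x. scaleC c (A x)) \<in> R) \<and>
     (\<forall>A\<in>R. cadjoint A \<in> R) \<and>
     commutant (commutant R) = R"

definition positive_op :: "('a::complex_inner \<Rightarrow> 'a) \<Rightarrow> bool" where
  "positive_op A \<longleftrightarrow> bounded_clinear A \<and>
     (\<forall>x. Im (cinner x (A x)) = 0 \<and> 0 \<le> Re (cinner x (A x)))"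

definition op_sqrt :: "('a::complex_inner \<Rightarrow> 'a) \<Rightarrow> ('a \<Rightarrow> 'a)" where
  "op_sqrt A = (THE B. positive_op B \<and> B \<circ> B = A)"

definition is_orth_proj :: "('a::complex_inner \<Rightarrow> 'a) \<Rightarrow> bool" where
  "is_orth_proj P \<longleftrightarrow> bounded_clinear P \<and> P \<circ> P = P \<and> cadjoint P = P"

definition range_proj :: "('a::complex_inner \<Rightarrow> 'a) \<Rightarrow> ('a \<Rightarrow> 'a)" where
  "range_proj A = (THE P. is_orth_proj P \<and> range P = closure (range A))"

end

theory Submission
  imports Defs
begin

text \<open>Put \<open>B = T\<^sub>n\<^sup>* T\<^sub>n\<close>, so that \<open>0 \<le> B \<le> I\<close>, and \<open>H = (I - B)\<^sup>1\<^sup>/\<^sup>2\<close>. Then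
  \<open>H\<^sup>2 = T\<^sub>1\<^sup>* T\<^sub>1 + \<dots> + T\<^sub>n\<^sub>-\<^sub>1\<^sup>* T\<^sub>n\<^sub>-\<^sub>1\<close>, hence \<open>\<parallel>T\<^sub>i x\<parallel> \<le> \<parallel>H x\<parallel>\<close>, and \<open>H x \<mapsto> T\<^sub>i x\<close>
  extends to a contraction on the closure of the range of \<open>H\<close>. Composed with the projection \<open>P\<close>
  onto that closure it gives \<open>S\<^sub>i\<close> with \<open>T\<^sub>i = S\<^sub>i H\<close>, and
  \<open>\<Sum> \<langle>S\<^sub>i H x, S\<^sub>i H y\<rangle> = \<Sum> \<langle>T\<^sub>i x, T\<^sub>i y\<rangle> = \<langle>H x, H y\<rangle>\<close> shows \<open>\<Sum> S\<^sub>i\<^sup>* S\<^sub>i = P\<close>.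
  Membership in \<open>R\<close> comes from \<open>R = R''\<close>: the square root is constructed as
  \<open>I - lim Z\<^sub>k\<close> with \<open>Z\<^sub>k\<^sub>+\<^sub>1 = (B + Z\<^sub>k\<^sup>2) / 2\<close>, a limit of polynomials in \<open>B\<close>, so \<open>H\<close>, and with
  it \<open>P\<close> and each \<open>S\<^sub>i\<close>, commutes with every operator commuting with \<open>R\<close>.\<close>

lemma cinner_add_right: "cinner x (y + z) = cinner x y + cinner x (z::'a::complex_inner)"
  by (metis cinner_add_left cinner_commute complex_cnj_add)

lemma cinner_scaleC_right: "cinner x (scaleC r y) = r * cinner x (y::'a::complex_inner)"
  by (metis cinner_commute cinner_scaleC_left complex_cnj_cnj complex_cnj_mult)

lemma cinner_zero_left [simp]: "cinner 0 (y::'a::complex_inner) = 0"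
  by (metis add_0 add_cancel_left_left cinner_add_left)

lemma cinner_zero_right [simp]: "cinner x (0::'a::complex_inner) = 0"
  by (metis cinner_commute cinner_zero_left complex_cnj_zero)

lemma cinner_scaleR_left: "cinner (scaleR r x) (y::'a::complex_inner) = of_real r * cinner x y"
  by (simp add: scaleR_scaleC cinner_scaleC_left)

lemma cinner_scaleR_right: "cinner x (scaleR r y::'a::complex_inner) = of_real r * cinner x y"
  by (simp add: scaleR_scaleC cinner_scaleC_right)

lemma cinner_minus_left: "cinner (- x) (y::'a::complex_inner) = - cinner x y"
  using cinner_scaleR_left[of "-1" x y] by simp

lemma cinner_minus_right: "cinner x (- y::'a::complex_inner) = - cinner x y"
  using cinner_scaleR_right[of x "-1" y] by simp

lemma cinner_diff_left: "cinner (x - z) (y::'a::complex_inner) = cinner x y - cinner z y"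
  by (simp only: diff_conv_add_uminus cinner_add_left cinner_minus_left)

lemma cinner_diff_right: "cinner x (y - z::'a::complex_inner) = cinner x y - cinner x z"
  by (simp only: diff_conv_add_uminus cinner_add_right cinner_minus_right)

lemma cinner_sum_left: "cinner (sum f A) (y::'a::complex_inner) = (\<Sum>i\<in>A. cinner (f i) y)"
  by (induction A rule: infinite_finite_induct) (simp_all add: cinner_add_left)

lemma cinner_sum_right: "cinner x (sum f A::'a::complex_inner) = (\<Sum>i\<in>A. cinner x (f i))"
  by (induction A rule: infinite_finite_induct) (simp_all add: cinner_add_right)

lemma cinner_self_eq_norm_power2: "cinner x (x::'a::complex_inner) = of_real ((norm x)\<^sup>2)"
  using cinner_nonneg[of x] norm_eq_sqrt_cinner[of x] by (simp add: complex_eq_iff)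

lemma Re_cinner_self: "Re (cinner x (x::'a::complex_inner)) = (norm x)\<^sup>2"
  by (simp add: cinner_self_eq_norm_power2)

lemma cinner_orthogonal_swap: "cinner x (y::'a::complex_inner) = 0 \<Longrightarrow> cinner y x = 0"
  by (metis cinner_commute complex_cnj_zero)

lemma ext_cinner_left: "(\<And>y. cinner a y = cinner b (y::'a::complex_inner)) \<Longrightarrow> a = b"
  by (metis cinner_diff_left cinner_eq_zero_iff eq_iff_diff_eq_0)

lemma scaleC_diff_right: "scaleC c (x - y::'a::complex_vector) = scaleC c x - scaleC c y"
  by (metis scaleC_add_right diff_add_cancel add_diff_cancel)

lemma scaleC_zero_right [simp]: "scaleC c (0::'a::complex_vector) = 0"
  by (metis add_cancel_right_right scaleC_add_right)

lemma norm_scaleC: "norm (scaleC c x) = cmod c * norm (x::'a::complex_inner)"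
proof -
  have "cinner (scaleC c x) (scaleC c x) = (cnj c * c) * cinner x x"
    by (simp add: cinner_scaleC_left cinner_scaleC_right)
  also have "\<dots> = of_real ((cmod c * norm x)\<^sup>2)"
    by (simp add: cinner_self_eq_norm_power2 power_mult_distrib mult.commute[of "cnj c"]
        flip: complex_norm_square)
  finally have "(norm (scaleC c x))\<^sup>2 = (cmod c * norm x)\<^sup>2"
    by (metis Re_cinner_self Re_complex_of_real)
  then show ?thesis by simp
qed

lemma pythagoras_cinner:
  assumes "cinner x (y::'a::complex_inner) = 0"
  shows "(norm (x + y))\<^sup>2 = (norm x)\<^sup>2 + (norm y)\<^sup>2"
proof -
  have "cinner (x + y) (x + y) = cinner x x + cinner y y"
    using assms cinner_orthogonal_swap[OF assms] by (simp add: cinner_add_left cinner_add_right)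
  then show ?thesis by (metis Re_cinner_self plus_complex.sel(1))
qed

lemma parallelogram_law:
  "(norm (a + b))\<^sup>2 + (norm (a - b))\<^sup>2 = 2 * (norm a)\<^sup>2 + 2 * (norm (b::'a::complex_inner))\<^sup>2"
proof -
  have "cinner (a + b) (a + b) + cinner (a - b) (a - b) = 2 * cinner a a + 2 * cinner b b"
    by (simp add: cinner_add_left cinner_add_right cinner_diff_left cinner_diff_right algebra_simps)
  from arg_cong[OF this, of Re] show ?thesis by (simp add: Re_cinner_self)
qed

lemma power2_norm_remove_component:
  fixes m w :: "'a::complex_inner"
  assumes "m \<noteq> 0"
  shows "(norm (w - scaleC (cinner m w / of_real ((norm m)\<^sup>2)) m))\<^sup>2
         = (norm w)\<^sup>2 - (cmod (cinner m w))\<^sup>2 / (norm m)\<^sup>2"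
proof -
  define a where "a = cinner m w"
  define N where "N = (norm m)\<^sup>2"
  define t where "t = a / of_real N"
  have "N > 0" using assms by (simp add: N_def)
  have aa: "a * cnj a = of_real ((cmod a)\<^sup>2)"
    by (metis complex_norm_square)
  have "cinner (w - scaleC t m) (w - scaleC t m)
      = cinner w w - t * cinner w m - cnj t * cinner m w + cnj t * t * cinner m m"
    by (simp add: cinner_diff_left cinner_diff_right cinner_scaleC_left cinner_scaleC_right
        algebra_simps)
  also have "\<dots> = cinner w w - of_real ((cmod a)\<^sup>2 / N)"
    using aa \<open>N > 0\<close> cinner_commute[of w m]
    by (simp add: t_def a_def[symmetric] N_def cinner_self_eq_norm_power2 field_simps)
  finally have "Re (cinner (w - scaleC t m) (w - scaleC t m)) = Re (cinner w w) - (cmod a)\<^sup>2 / N"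
    by simp
  then show ?thesis by (simp only: Re_cinner_self t_def a_def N_def)
qed

lemma norm_cinner_le: "cmod (cinner x y) \<le> norm x * norm (y::'a::complex_inner)"
proof (cases "x = 0")
  case False
  have "0 \<le> (norm y)\<^sup>2 - (cmod (cinner x y))\<^sup>2 / (norm x)\<^sup>2"
    using power2_norm_remove_component[OF False, of y] by (metis zero_le_power2)
  then have "(cmod (cinner x y))\<^sup>2 \<le> (norm x * norm y)\<^sup>2"
    using False by (simp add: field_simps)
  then show ?thesis by (rule power2_le_imp_le) simp
qed simp

lemma bounded_bilinear_cinner: "bounded_bilinear (cinner :: 'a::complex_inner \<Rightarrow> 'a \<Rightarrow> complex)"
proof
  show "\<exists>K. \<forall>a b::'a. norm (cinner a b) \<le> norm a * norm b * K"
    using norm_cinner_le by (intro exI[of _ 1]) auto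
qed (simp_all add: cinner_add_left cinner_add_right cinner_scaleR_left cinner_scaleR_right
       scaleR_conv_of_real)

lemmas tendsto_cinner = bounded_bilinear.tendsto[OF bounded_bilinear_cinner]

lemma bounded_clinearI:
  assumes "\<And>x y. T (x + y) = T x + T y" "\<And>c x. T (scaleC c x) = scaleC c (T x)"
    and "\<And>x. norm (T x) \<le> norm x * K"
  shows "bounded_clinear T"
  using assms unfolding bounded_clinear_def by blast

lemma bounded_clinear_imp_bounded_linear:
  assumes "bounded_clinear (T::'a::complex_inner \<Rightarrow> 'b::complex_inner)"
  shows "bounded_linear T"
proof -
  obtain K where "\<And>x. norm (T x) \<le> norm x * K"
    using assms by (auto simp: bounded_clinear_def)
  with assms show ?thesis
    by (intro bounded_linear_intro[of _ K]) (simp_all add: bounded_clinear_def scaleR_scaleC)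
qed

context
  fixes T :: "'a::complex_inner \<Rightarrow> 'b::complex_inner"
  assumes T: "bounded_clinear T"
begin

lemma clinear_add: "T (x + y) = T x + T y"
  using T by (simp add: bounded_clinear_def)

lemma clinear_scaleC: "T (scaleC c x) = scaleC c (T x)"
  using T by (simp add: bounded_clinear_def)

lemma clinear_scaleR: "T (scaleR r x) = scaleR r (T x)"
  by (simp add: clinear_scaleC scaleR_scaleC)

lemmas clinear_diff = linear_diff[OF bounded_linear.linear[OF bounded_clinear_imp_bounded_linear[OF T]]]
  and clinear_zero = linear_0[OF bounded_linear.linear[OF bounded_clinear_imp_bounded_linear[OF T]]]
  and clinear_tendsto = bounded_linear.tendsto[OF bounded_clinear_imp_bounded_linear[OF T]]

end

lemma bounded_clinear_ident: "bounded_clinear (\<lambda>x::'a::complex_inner. x)"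
  by (rule bounded_clinearI[of _ 1]) auto

lemma bounded_clinear_zero: "bounded_clinear (\<lambda>x::'a::complex_inner. 0::'b::complex_inner)"
  by (rule bounded_clinearI[of _ 0]) auto

lemma bounded_clinear_scaleC_op: "bounded_clinear (\<lambda>x::'a::complex_inner. scaleC c x)"
  by (rule bounded_clinearI[of _ "cmod c"])
     (auto simp: scaleC_add_right scaleC_scaleC mult.commute norm_scaleC)

lemma bounded_clinear_compose:
  assumes F: "bounded_clinear F" and G: "bounded_clinear G"
  shows "bounded_clinear (\<lambda>x. F (G x))"
proof -
  obtain K where K: "\<And>x. norm (F x) \<le> norm x * K" "K \<ge> 0"
    using bounded_linear.nonneg_bounded[OF bounded_clinear_imp_bounded_linear[OF F]]
    by (auto simp: mult.commute)
  obtain L where L: "\<And>x. norm (G x) \<le> norm x * L"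
    using G by (auto simp: bounded_clinear_def)
  have "norm (F (G x)) \<le> norm x * (L * K)" for x
    using K(1)[of "G x"] mult_right_mono[OF L[of x] K(2)] by (simp add: mult.assoc)
  then show ?thesis
    by (intro bounded_clinearI) (simp_all add: clinear_add[OF F] clinear_add[OF G]
        clinear_scaleC[OF F] clinear_scaleC[OF G])
qed

lemma bounded_clinear_add:
  assumes F: "bounded_clinear F" and G: "bounded_clinear G"
  shows "bounded_clinear (\<lambda>x. F x + G x)"
proof -
  obtain K where K: "\<And>x. norm (F x) \<le> norm x * K" using F by (auto simp: bounded_clinear_def)
  obtain L where L: "\<And>x. norm (G x) \<le> norm x * L" using G by (auto simp: bounded_clinear_def)
  show ?thesis
  proof (rule bounded_clinearI[of _ "K + L"])
    show "norm (F x + G x) \<le> norm x * (K + L)" for x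
      using norm_triangle_ineq[of "F x" "G x"] K[of x] L[of x] by (simp add: distrib_left)
  qed (simp_all add: clinear_add[OF F] clinear_add[OF G] clinear_scaleC[OF F]
         clinear_scaleC[OF G] scaleC_add_right)
qed

lemma bounded_clinear_scaleR:
  assumes F: "bounded_clinear F"
  shows "bounded_clinear (\<lambda>x. scaleR r (F x))"
  using bounded_clinear_compose[OF bounded_clinear_scaleC_op F, of "of_real r"]
  by (simp add: scaleR_scaleC)

lemma bounded_clinear_diff:
  assumes "bounded_clinear F" and "bounded_clinear G"
  shows "bounded_clinear (\<lambda>x. F x - G x)"
  using bounded_clinear_add[OF assms(1) bounded_clinear_scaleR[OF assms(2), of "-1"]] by simp

lemma bounded_clinear_funpow:
  fixes F :: "'a::complex_inner \<Rightarrow> 'a"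
  shows "bounded_clinear F \<Longrightarrow> bounded_clinear (F ^^ n)"
proof (induction n)
  case 0
  show ?case using bounded_clinear_ident by (simp add: id_def)
next
  case (Suc n)
  show ?case using bounded_clinear_compose[OF Suc.prems Suc.IH[OF Suc.prems]] by simp
qed

section \<open>Orthogonal projections onto closed subspaces\<close>

definition csubspace :: "'a::complex_vector set \<Rightarrow> bool" where
  "csubspace M \<longleftrightarrow> 0 \<in> M \<and> (\<forall>x\<in>M. \<forall>y\<in>M. x + y \<in> M) \<and> (\<forall>c. \<forall>x\<in>M. scaleC c x \<in> M)"

lemma csubspace_add: "csubspace M \<Longrightarrow> x \<in> M \<Longrightarrow> y \<in> M \<Longrightarrow> x + y \<in> M"
  by (simp add: csubspace_def)

lemma csubspace_scaleC: "csubspace M \<Longrightarrow> x \<in> M \<Longrightarrow> scaleC c x \<in> M"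
  by (simp add: csubspace_def)

lemma csubspace_scaleR: "csubspace M \<Longrightarrow> x \<in> M \<Longrightarrow> scaleR r x \<in> M"
  by (simp add: csubspace_def scaleR_scaleC)

lemma csubspace_diff: "csubspace M \<Longrightarrow> x \<in> M \<Longrightarrow> y \<in> M \<Longrightarrow> x - y \<in> M"
  using csubspace_add[of M x "scaleR (-1) y"] csubspace_scaleR[of M y "-1"] by simp

lemma csubspace_range:
  assumes T: "bounded_clinear T"
  shows "csubspace (range T)"
  unfolding csubspace_def
proof (intro conjI ballI allI)
  show "0 \<in> range T" using clinear_zero[OF T] by (metis rangeI)
  show "x + y \<in> range T" if "x \<in> range T" "y \<in> range T" for x y
  proof -
    from that obtain a b where "x = T a" "y = T b" by blast
    then have "x + y = T (a + b)" using clinear_add[OF T, of a b] by simp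
    then show ?thesis by blast
  qed
  show "scaleC c x \<in> range T" if "x \<in> range T" for c x
  proof -
    from that obtain a where "x = T a" by blast
    then have "scaleC c x = T (scaleC c a)" using clinear_scaleC[OF T, of c a] by simp
    then show ?thesis by blast
  qed
qed

lemma csubspace_closure:
  fixes S :: "'a::complex_inner set"
  assumes S: "csubspace S"
  shows "csubspace (closure S)"
  unfolding csubspace_def
proof (intro conjI ballI allI)
  show "0 \<in> closure S" using S closure_subset by (auto simp: csubspace_def)
next
  fix x y assume "x \<in> closure S" "y \<in> closure S"
  then obtain f g where f: "\<And>n. f n \<in> S" "f \<longlonglongrightarrow> x" and g: "\<And>n. g n \<in> S" "g \<longlonglongrightarrow> y"
    unfolding closure_sequential by blast
  have "(\<lambda>n. f n + g n) \<longlonglongrightarrow> x + y" using f(2) g(2) by (rule tendsto_add)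
  moreover have "f n + g n \<in> S" for n using csubspace_add[OF S f(1) g(1)] .
  ultimately show "x + y \<in> closure S"
    unfolding closure_sequential by (intro exI[of _ "\<lambda>n. f n + g n"]) simp
next
  fix c x assume "x \<in> closure S"
  then obtain f where f: "\<And>n. f n \<in> S" "f \<longlonglongrightarrow> x"
    unfolding closure_sequential by blast
  have "(\<lambda>n. scaleC c (f n)) \<longlonglongrightarrow> scaleC c x"
    using f(2) by (rule clinear_tendsto[OF bounded_clinear_scaleC_op])
  moreover have "scaleC c (f n) \<in> S" for n using csubspace_scaleC[OF S f(1)] .
  ultimately show "scaleC c x \<in> closure S"
    unfolding closure_sequential by (intro exI[of _ "\<lambda>n. scaleC c (f n)"]) simp
qed

lemma closure_range_tendsto:
  fixes H :: "'a \<Rightarrow> 'b::metric_space"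
  assumes "w \<in> closure (range H)"
  obtains x where "(\<lambda>k. H (x k)) \<longlonglongrightarrow> w"
proof -
  obtain s where s: "\<And>n. s n \<in> range H" "s \<longlonglongrightarrow> w"
    using assms unfolding closure_sequential by blast
  have "H (inv H (s n)) = s n" for n
    using s(1)[of n] by (rule f_inv_into_f)
  with s(2) show thesis by (intro that[of "\<lambda>n. inv H (s n)"]) simp
qed

lemma closure_range_invariant:
  fixes H :: "'a::complex_inner \<Rightarrow> 'a"
  assumes A: "bounded_clinear A" and AH: "\<And>x. A (H x) = H (A x)" and w: "w \<in> closure (range H)"
  shows "A w \<in> closure (range H)"
proof -
  obtain x where "(\<lambda>k. H (x k)) \<longlonglongrightarrow> w" by (rule closure_range_tendsto[OF w])
  then have "(\<lambda>k. H (A (x k))) \<longlonglongrightarrow> A w" using clinear_tendsto[OF A] by (simp flip: AH)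
  then show ?thesis unfolding closure_sequential by (intro exI[of _ "\<lambda>k. H (A (x k))"]) simp
qed

lemma Cauchy_of_power2_norm_diff_le:
  fixes f :: "nat \<Rightarrow> 'a::real_normed_vector"
  assumes bound: "\<And>j k. (norm (f j - f k))\<^sup>2 \<le> 2 / (real j + 1) + 2 / (real k + 1)"
  shows "Cauchy f"
proof (rule metric_CauchyI)
  fix e :: real assume e: "0 < e"
  obtain N :: nat where N: "4 / e\<^sup>2 < real N" using reals_Archimedean2 by blast
  have small: "2 / (real N + 1) + 2 / (real N + 1) < e\<^sup>2"
  proof -
    have "4 < real N * e\<^sup>2" using N e by (simp add: field_simps)
    also have "\<dots> < (real N + 1) * e\<^sup>2" using e by (simp add: distrib_right)
    finally have "4 / (real N + 1) < e\<^sup>2" by (simp add: field_simps)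
    then show ?thesis by (simp flip: add_divide_distrib)
  qed
  have tail: "2 / (real j + 1) \<le> 2 / (real N + 1)" if "N \<le> j" for j
    using that by (auto intro!: divide_left_mono)
  show "\<exists>M. \<forall>m\<ge>M. \<forall>n\<ge>M. dist (f m) (f n) < e"
  proof (intro exI allI impI)
    fix j k assume "N \<le> j" "N \<le> k"
    then have "(norm (f j - f k))\<^sup>2 < e\<^sup>2"
      using bound[of j k] tail[of j] tail[of k] small by linarith
    then show "dist (f j) (f k) < e" using e by (simp add: dist_norm power_less_imp_less_base)
  qed
qed

lemma parallelogram_midpoint_bound:
  fixes x a b :: "'a::complex_inner"
  assumes "0 \<le> d" and "d \<le> norm (x - scaleR (1/2) (a + b))"
  shows "(norm (a - b))\<^sup>2 \<le> 2 * (norm (x - a))\<^sup>2 + 2 * (norm (x - b))\<^sup>2 - 4 * d\<^sup>2"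
proof -
  have "x - a + (x - b) = scaleR 2 (x - scaleR (1/2) (a + b))"
    by (simp add: algebra_simps scaleR_2)
  then have "norm (x - a + (x - b)) = 2 * norm (x - scaleR (1/2) (a + b))"
    by simp
  with assms have "4 * d\<^sup>2 \<le> (norm (x - a + (x - b)))\<^sup>2"
    by (simp add: power_mult_distrib power_mono)
  moreover have "(norm (x - a - (x - b)))\<^sup>2 = (norm (a - b))\<^sup>2"
    by (simp add: norm_minus_commute)
  ultimately show ?thesis
    using parallelogram_law[of "x - a" "x - b"] by linarith
qed

lemma closed_csubspace_nearest_point:
  fixes x :: "'a::chilbert_space"
  assumes M: "csubspace M" "closed M"
  shows "\<exists>p\<in>M. \<forall>m\<in>M. norm (x - p) \<le> norm (x - m)"
proof -
  define D where "D = (\<lambda>m. norm (x - m)) ` M"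
  define d where "d = Inf D"
  have "D \<noteq> {}" using M by (auto simp: D_def csubspace_def)
  have "bdd_below D" unfolding D_def by (rule bdd_belowI[of _ 0]) auto
  have d_le: "d \<le> norm (x - m)" if "m \<in> M" for m
    unfolding d_def using \<open>bdd_below D\<close> that by (auto intro: cInf_lower simp: D_def)
  have "0 \<le> d" unfolding d_def using \<open>D \<noteq> {}\<close> by (auto intro!: cInf_greatest simp: D_def)
  have "\<exists>m\<in>M. (norm (x - m))\<^sup>2 < d\<^sup>2 + 1 / (real k + 1)" for k
  proof -
    have "d < sqrt (d\<^sup>2 + 1 / (real k + 1))"
      by (rule real_less_rsqrt) (simp add: add_pos_pos)
    then obtain v where "v \<in> D" "v < sqrt (d\<^sup>2 + 1 / (real k + 1))"
      unfolding d_def using \<open>D \<noteq> {}\<close> by (meson cInf_lessD)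
    then obtain m where "m \<in> M" "norm (x - m) < sqrt (d\<^sup>2 + 1 / (real k + 1))"
      by (auto simp: D_def)
    then show ?thesis by (metis norm_ge_zero real_sqrt_less_iff real_sqrt_abs abs_of_nonneg)
  qed
  then obtain ms where ms: "\<And>k. ms k \<in> M" "\<And>k. (norm (x - ms k))\<^sup>2 < d\<^sup>2 + 1 / (real k + 1)"
    by metis
  have "(norm (ms j - ms k))\<^sup>2 \<le> 2 / (real j + 1) + 2 / (real k + 1)" for j k
  proof -
    have "scaleR (1/2) (ms j + ms k) \<in> M"
      using M ms by (intro csubspace_scaleR csubspace_add) auto
    from parallelogram_midpoint_bound[OF \<open>0 \<le> d\<close> d_le[OF this]] ms(2)[of j] ms(2)[of k]
    show ?thesis by linarith
  qed
  then have "Cauchy ms" by (rule Cauchy_of_power2_norm_diff_le)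
  then obtain p where p: "ms \<longlonglongrightarrow> p"
    using Cauchy_convergent_iff convergent_def by blast
  have "p \<in> M" using M(2) ms(1) p closed_sequentially by blast
  have "(\<lambda>k. (norm (x - ms k))\<^sup>2) \<longlonglongrightarrow> (norm (x - p))\<^sup>2"
    by (intro tendsto_intros p)
  moreover have "(\<lambda>k. d\<^sup>2 + 1 / (real k + 1)) \<longlonglongrightarrow> d\<^sup>2 + 0"
  proof -
    have "(\<lambda>k. 1 / (real k + 1)) \<longlonglongrightarrow> 0"
      using LIMSEQ_inverse_real_of_nat by (simp add: inverse_eq_divide add.commute)
    then show ?thesis by (intro tendsto_intros)
  qed
  ultimately have "(norm (x - p))\<^sup>2 \<le> d\<^sup>2 + 0"
    by (rule LIMSEQ_le) (use ms(2) less_imp_le in blast)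
  then have "norm (x - p) \<le> d"
    using \<open>0 \<le> d\<close> power2_le_imp_le[of "norm (x - p)" d] by simp
  with d_le have "\<forall>m\<in>M. norm (x - p) \<le> norm (x - m)" by (meson order_trans)
  with \<open>p \<in> M\<close> show ?thesis by blast
qed

text \<open>A nearest point is characterised by orthogonality: otherwise subtracting the component of
  the error along \<open>m\<close> would bring it closer.\<close>

lemma closed_csubspace_orthogonal_decomposition:
  fixes x :: "'a::chilbert_space"
  assumes M: "csubspace M" "closed M"
  shows "\<exists>p\<in>M. \<forall>m\<in>M. cinner m (x - p) = 0"
proof -
  obtain p where p: "p \<in> M" and pmin: "\<And>m. m \<in> M \<Longrightarrow> norm (x - p) \<le> norm (x - m)"
    using closed_csubspace_nearest_point[OF M] by blast
  have "cinner m (x - p) = 0" if m: "m \<in> M" for m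
  proof (cases "m = 0")
    case False
    define t where "t = cinner m (x - p) / of_real ((norm m)\<^sup>2)"
    have "p + scaleC t m \<in> M" using M p m by (intro csubspace_add csubspace_scaleC)
    then have "norm (x - p) \<le> norm ((x - p) - scaleC t m)"
      using pmin by (simp add: diff_diff_eq)
    then have "(norm (x - p))\<^sup>2 \<le> (norm ((x - p) - scaleC t m))\<^sup>2"
      by (simp add: power_mono)
    also have "\<dots> = (norm (x - p))\<^sup>2 - (cmod (cinner m (x - p)))\<^sup>2 / (norm m)\<^sup>2"
      unfolding t_def by (rule power2_norm_remove_component[OF False])
    finally have "(cmod (cinner m (x - p)))\<^sup>2 \<le> 0"
      using False by (simp add: divide_le_0_iff)
    then show ?thesis by simp
  qed simp
  with p show ?thesis by blast
qed

definition orth_proj :: "'a::complex_inner set \<Rightarrow> 'a \<Rightarrow> 'a" where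
  "orth_proj M z = (SOME p. p \<in> M \<and> (\<forall>m\<in>M. cinner m (z - p) = 0))"

locale closed_csubspace =
  fixes M :: "'a::chilbert_space set"
  assumes csubspace: "csubspace M" and closed: "closed M"
begin

lemma orth_proj_in: "orth_proj M z \<in> M"
  and orth_proj_orthogonal: "m \<in> M \<Longrightarrow> cinner m (z - orth_proj M z) = 0"
proof -
  have "\<exists>p. p \<in> M \<and> (\<forall>m\<in>M. cinner m (z - p) = 0)"
    using closed_csubspace_orthogonal_decomposition[OF csubspace closed, of z] by blast
  from someI_ex[OF this] show "orth_proj M z \<in> M" "m \<in> M \<Longrightarrow> cinner m (z - orth_proj M z) = 0"
    unfolding orth_proj_def by blast+
qed

lemma orth_proj_unique:
  assumes p: "p \<in> M" and orth: "\<And>m. m \<in> M \<Longrightarrow> cinner m (z - p) = 0"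
  shows "orth_proj M z = p"
proof -
  have d: "orth_proj M z - p \<in> M" using p orth_proj_in csubspace csubspace_diff by blast
  have "cinner (orth_proj M z - p) (orth_proj M z - p)
      = cinner (orth_proj M z - p) (z - p) - cinner (orth_proj M z - p) (z - orth_proj M z)"
    by (simp add: cinner_diff_right)
  also have "\<dots> = 0" using orth[OF d] orth_proj_orthogonal[OF d] by simp
  finally show ?thesis by (simp add: cinner_eq_zero_iff)
qed

lemma orth_proj_id: "m \<in> M \<Longrightarrow> orth_proj M m = m"
  by (rule orth_proj_unique) auto

lemma range_orth_proj: "range (orth_proj M) = M"
proof
  show "M \<subseteq> range (orth_proj M)"
    using orth_proj_id by (metis rangeI subsetI)
qed (use orth_proj_in in blast)

lemma norm_orth_proj_le: "norm (orth_proj M z) \<le> norm z"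
proof -
  have "cinner (orth_proj M z) (z - orth_proj M z) = 0"
    by (rule orth_proj_orthogonal[OF orth_proj_in])
  from pythagoras_cinner[OF this] have "(norm (orth_proj M z))\<^sup>2 \<le> (norm z)\<^sup>2"
    by simp
  then show ?thesis by (rule power2_le_imp_le) simp
qed

lemma bounded_clinear_orth_proj: "bounded_clinear (orth_proj M)"
proof (rule bounded_clinearI[of _ 1])
  fix x y
  show "orth_proj M (x + y) = orth_proj M x + orth_proj M y"
  proof (rule orth_proj_unique)
    show "orth_proj M x + orth_proj M y \<in> M" by (rule csubspace_add[OF csubspace orth_proj_in orth_proj_in])
    fix m assume "m \<in> M"
    then show "cinner m (x + y - (orth_proj M x + orth_proj M y)) = 0"
      using orth_proj_orthogonal[of m x] orth_proj_orthogonal[of m y]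
      by (simp add: cinner_diff_right cinner_add_right)
  qed
next
  fix c x
  show "orth_proj M (scaleC c x) = scaleC c (orth_proj M x)"
  proof (rule orth_proj_unique)
    show "scaleC c (orth_proj M x) \<in> M" by (rule csubspace_scaleC[OF csubspace orth_proj_in])
    fix m assume "m \<in> M"
    then show "cinner m (scaleC c x - scaleC c (orth_proj M x)) = 0"
      using orth_proj_orthogonal[of m x] by (simp flip: scaleC_diff_right add: cinner_scaleC_right)
  qed
qed (simp add: norm_orth_proj_le)

lemma orth_proj_selfadjoint: "cinner (orth_proj M u) v = cinner u (orth_proj M v)"
proof -
  have "cinner (orth_proj M u) (v - orth_proj M v) = 0"
    by (rule orth_proj_orthogonal[OF orth_proj_in])
  moreover have "cinner (u - orth_proj M u) (orth_proj M v) = 0"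
    by (rule cinner_orthogonal_swap[OF orth_proj_orthogonal[OF orth_proj_in]])
  ultimately show ?thesis by (simp add: cinner_diff_left cinner_diff_right)
qed

end

lemma riesz_representation:
  fixes f :: "'a::chilbert_space \<Rightarrow> complex"
  assumes add: "\<And>x y. f (x + y) = f x + f y"
    and scal: "\<And>c x. f (scaleC c x) = c * f x"
    and bnd: "\<And>x. norm (f x) \<le> norm x * K"
  shows "\<exists>z. \<forall>y. f y = cinner z y"
proof (cases "\<forall>y. f y = 0")
  case False
  then obtain u where u: "f u \<noteq> 0" by blast
  have "bounded_linear f"
    using scal[of "of_real r" for r]
    by (intro bounded_linear_intro[of _ K] add bnd) (simp add: scaleR_scaleC scaleR_conv_of_real)
  then have lin: "linear f" by (rule bounded_linear.linear)
  define Ker where "Ker = {y. f y = 0}"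
  have "csubspace Ker"
    unfolding Ker_def csubspace_def by (simp add: add scal linear_0[OF lin])
  moreover have "closed Ker"
    unfolding Ker_def
    by (intro closed_Collect_eq continuous_on_const bounded_linear.continuous_on[OF \<open>bounded_linear f\<close>]
        continuous_on_id)
  ultimately obtain p where p: "p \<in> Ker" "\<And>m. m \<in> Ker \<Longrightarrow> cinner m (u - p) = 0"
    using closed_csubspace_orthogonal_decomposition[of Ker u] by blast
  define w where "w = u - p"
  have fw: "f w = f u" using p(1) by (simp add: w_def Ker_def linear_diff[OF lin])
  have "w \<noteq> 0" using fw u by (metis linear_0[OF lin])
  have orth: "\<And>m. m \<in> Ker \<Longrightarrow> cinner w m = 0"
    using p(2) by (simp add: w_def cinner_orthogonal_swap)
  show ?thesis
  proof (intro exI allI)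
    fix y
    have "y - scaleC (f y / f w) w \<in> Ker"
      using fw u by (simp add: Ker_def linear_diff[OF lin] scal)
    then have "cinner w (y - scaleC (f y / f w) w) = 0" by (rule orth)
    then have "cinner w y = (f y / f w) * of_real ((norm w)\<^sup>2)"
      by (simp add: cinner_diff_right cinner_scaleC_right cinner_self_eq_norm_power2)
    then show "f y = cinner (scaleC (cnj (f w) / of_real ((norm w)\<^sup>2)) w) y"
      using \<open>w \<noteq> 0\<close> fw u by (simp add: cinner_scaleC_left field_simps)
  qed
qed (auto intro: exI[of _ 0])

lemma cadjoint_exists:
  fixes T :: "'a::chilbert_space \<Rightarrow> 'a"
  assumes T: "bounded_clinear T"
  shows "\<exists>S. \<forall>x y. cinner (S x) y = cinner x (T y)"
proof -
  obtain K where K: "\<And>x. norm (T x) \<le> norm x * K" "K \<ge> 0"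
    using bounded_linear.nonneg_bounded[OF bounded_clinear_imp_bounded_linear[OF T]]
    by (auto simp: mult.commute)
  have "\<exists>z. \<forall>y. cinner x (T y) = cinner z y" for x
  proof (rule riesz_representation[of _ "norm x * K"])
    show "norm (cinner x (T y)) \<le> norm y * (norm x * K)" for y
      using norm_cinner_le[of x "T y"] mult_left_mono[OF K(1)[of y] norm_ge_zero[of x]]
      by (simp add: mult_ac)
  qed (simp_all add: clinear_add[OF T] clinear_scaleC[OF T] cinner_add_right cinner_scaleC_right)
  then show ?thesis by metis
qed

lemma cinner_cadjoint_left:
  fixes T :: "'a::chilbert_space \<Rightarrow> 'a"
  assumes "bounded_clinear T"
  shows "cinner (cadjoint T x) y = cinner x (T y)"
  using someI_ex[OF cadjoint_exists[OF assms]] unfolding cadjoint_def by blast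

lemma cinner_cadjoint_right:
  fixes T :: "'a::chilbert_space \<Rightarrow> 'a"
  assumes "bounded_clinear T"
  shows "cinner y (cadjoint T x) = cinner (T y) x"
  by (metis assms cinner_cadjoint_left cinner_commute)

lemma cadjoint_eqI:
  fixes T :: "'a::complex_inner \<Rightarrow> 'a"
  assumes "\<And>x y. cinner (S x) y = cinner x (T y)"
  shows "cadjoint T = S"
proof -
  have "\<forall>x y. cinner (cadjoint T x) y = cinner x (T y)"
    unfolding cadjoint_def by (rule someI[of _ S]) (use assms in blast)
  then show ?thesis using assms by (intro ext ext_cinner_left) metis
qed

lemma bounded_clinear_cadjoint:
  fixes T :: "'a::chilbert_space \<Rightarrow> 'a"
  assumes T: "bounded_clinear T"
  shows "bounded_clinear (cadjoint T)"
proof -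
  obtain K where K: "\<And>x. norm (T x) \<le> norm x * K" "K \<ge> 0"
    using bounded_linear.nonneg_bounded[OF bounded_clinear_imp_bounded_linear[OF T]]
    by (auto simp: mult.commute)
  note adj = cinner_cadjoint_left[OF T]
  show ?thesis
  proof (rule bounded_clinearI[of _ K])
    show "cadjoint T (x + y) = cadjoint T x + cadjoint T y" for x y
      by (rule ext_cinner_left) (simp add: adj cinner_add_left)
    show "cadjoint T (scaleC c x) = scaleC c (cadjoint T x)" for c x
      by (rule ext_cinner_left) (simp add: adj cinner_scaleC_left)
    show "norm (cadjoint T x) \<le> norm x * K" for x
    proof -
      let ?s = "cadjoint T x"
      have "(norm ?s)\<^sup>2 = Re (cinner x (T ?s))" by (simp flip: adj Re_cinner_self)
      also have "\<dots> \<le> norm x * norm (T ?s)"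
        by (rule order_trans[OF complex_Re_le_cmod norm_cinner_le])
      also have "\<dots> \<le> norm ?s * (norm x * K)"
        using mult_left_mono[OF K(1)[of ?s] norm_ge_zero[of x]] by (simp add: mult_ac)
      finally show ?thesis
        using K(2) by (cases "?s = 0") (simp_all add: power2_eq_square mult_le_cancel_left_pos)
    qed
  qed
qed

lemma (in closed_csubspace) orth_proj_commute:
  assumes A: "bounded_clinear A"
    and AM: "\<And>m. m \<in> M \<Longrightarrow> A m \<in> M" and A'M: "\<And>m. m \<in> M \<Longrightarrow> cadjoint A m \<in> M"
  shows "orth_proj M (A z) = A (orth_proj M z)"
proof (rule orth_proj_unique)
  show "A (orth_proj M z) \<in> M" by (rule AM[OF orth_proj_in])
  fix m assume "m \<in> M"
  have "cinner m (A z - A (orth_proj M z)) = cinner (cadjoint A m) (z - orth_proj M z)"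
    by (simp add: cinner_cadjoint_left[OF A] clinear_diff[OF A])
  also have "\<dots> = 0" by (rule orth_proj_orthogonal[OF A'M[OF \<open>m \<in> M\<close>]])
  finally show "cinner m (A z - A (orth_proj M z)) = 0" .
qed

lemma (in closed_csubspace) is_orth_proj_orth_proj: "is_orth_proj (orth_proj M)"
  unfolding is_orth_proj_def
  using bounded_clinear_orth_proj cadjoint_eqI[OF orth_proj_selfadjoint]
  by (auto simp: fun_eq_iff orth_proj_id orth_proj_in)

lemma (in closed_csubspace) is_orth_proj_eq_orth_proj:
  assumes Q: "is_orth_proj Q" and "range Q = M"
  shows "Q = orth_proj M"
proof
  fix z
  have Qb: "bounded_clinear Q" and QQ: "Q (Q y) = Q y" for y
    using Q by (auto simp: is_orth_proj_def fun_eq_iff)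
  have Qh: "cinner (Q a) b = cinner a (Q b)" for a b
    using cinner_cadjoint_left[OF Qb, of a b] Q by (simp add: is_orth_proj_def)
  show "Q z = orth_proj M z"
  proof (rule orth_proj_unique[symmetric])
    show "Q z \<in> M" using \<open>range Q = M\<close> by blast
    fix m assume "m \<in> M"
    then obtain m' where "m = Q m'" using \<open>range Q = M\<close> by blast
    then have "cinner m (z - Q z) = cinner m' (Q z - Q (Q z))"
      by (simp only: Qh cinner_diff_right clinear_diff[OF Qb])
    then show "cinner m (z - Q z) = 0" by (simp add: QQ)
  qed
qed

lemma range_proj_eq_orth_proj:
  fixes A :: "'a::chilbert_space \<Rightarrow> 'a"
  assumes "bounded_clinear A"
  shows "range_proj A = orth_proj (closure (range A))"
proof -
  interpret closed_csubspace "closure (range A)"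
    using assms by unfold_locales (auto intro: csubspace_closure csubspace_range)
  show ?thesis
    unfolding range_proj_def
  proof (rule the_equality)
    show "is_orth_proj (orth_proj (closure (range A))) \<and>
        range (orth_proj (closure (range A))) = closure (range A)"
      using is_orth_proj_orth_proj range_orth_proj by blast
  qed (use is_orth_proj_eq_orth_proj in blast)
qed

section \<open>Positive operators\<close>

definition hermitian :: "('a::complex_inner \<Rightarrow> 'a) \<Rightarrow> bool" where
  "hermitian D \<longleftrightarrow> (\<forall>u v. cinner (D u) v = cinner u (D v))"

lemma hermitian_Im_cinner_self: "hermitian D \<Longrightarrow> Im (cinner x (D x)) = 0"
  using cinner_commute[of x "D x"] by (simp add: hermitian_def complex_eq_iff)

lemma positive_opI:
  assumes "bounded_clinear D" "hermitian D" "\<And>x. 0 \<le> Re (cinner x (D x))"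
  shows "positive_op D"
  using assms hermitian_Im_cinner_self by (auto simp: positive_op_def)

lemma positive_op_nonneg: "positive_op D \<Longrightarrow> 0 \<le> Re (cinner x (D x))"
  by (simp add: positive_op_def)

lemma positive_op_bounded_clinear: "positive_op D \<Longrightarrow> bounded_clinear D"
  by (simp add: positive_op_def)

text \<open>Polarization: over the complex field a real quadratic form \<open>\<langle>x, D x\<rangle>\<close> forces \<open>D\<close>
  to be hermitian.\<close>

lemma positive_op_hermitian:
  assumes "positive_op D"
  shows "hermitian D"
proof -
  have D: "bounded_clinear D" and re: "\<And>x. Im (cinner x (D x)) = 0"
    using assms by (auto simp: positive_op_def)
  define f where "f u v = cinner u (D v) - cinner (D u) v" for u v
  have diag: "f w w = 0" for w
    using cinner_commute[of "D w" w] re[of w] by (simp add: f_def complex_eq_iff)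
  have "f (u + v) (u + v) = f u u + f u v + f v u + f v v" for u v
    by (simp add: f_def clinear_add[OF D] cinner_add_left cinner_add_right algebra_simps)
  then have sym: "f u v + f v u = 0" for u v using diag by simp
  have "f (u + scaleC \<i> v) (u + scaleC \<i> v) = f u u + \<i> * f u v - \<i> * f v u + f v v" for u v
    by (simp add: f_def clinear_add[OF D] clinear_scaleC[OF D] cinner_add_left cinner_add_right
        cinner_scaleC_left cinner_scaleC_right algebra_simps)
  then have "\<i> * (f u v - f v u) = 0" for u v using diag by (simp add: right_diff_distrib)
  then have "f u v = 0" for u v using sym[of u v] by (simp add: eq_neg_iff_add_eq_0[symmetric])
  then show ?thesis by (simp add: hermitian_def f_def)
qed

text \<open>Non-negativity of the quadratic form along \<open>x - t D x\<close>.\<close>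

lemma positive_op_quadratic_bound:
  assumes "positive_op D"
  shows "2 * t * (norm (D x))\<^sup>2 \<le> Re (cinner x (D x)) + t\<^sup>2 * Re (cinner (D x) (D (D x)))"
proof -
  have D: "bounded_clinear D" using assms by (rule positive_op_bounded_clinear)
  define y where "y = x - scaleR t (D x)"
  have "cinner y (D y) = cinner x (D x) - of_real t * cinner x (D (D x))
      - of_real t * cinner (D x) (D x) + of_real t * of_real t * cinner (D x) (D (D x))"
    by (simp add: y_def clinear_diff[OF D] clinear_scaleR[OF D] cinner_diff_left cinner_diff_right
        cinner_scaleR_left cinner_scaleR_right algebra_simps)
  also have "cinner x (D (D x)) = cinner (D x) (D x)"
    using positive_op_hermitian[OF assms] by (simp add: hermitian_def)
  finally have "Re (cinner y (D y))
      = Re (cinner x (D x)) - 2 * t * (norm (D x))\<^sup>2 + t\<^sup>2 * Re (cinner (D x) (D (D x)))"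
    by (simp add: Re_cinner_self power2_eq_square)
  moreover have "0 \<le> Re (cinner y (D y))" using assms by (rule positive_op_nonneg)
  ultimately show ?thesis by linarith
qed

lemma positive_op_eq_zero_if_form_zero:
  assumes "positive_op D" and "Re (cinner x (D x)) = 0"
  shows "D x = 0"
proof (rule ccontr)
  assume "D x \<noteq> 0"
  define s where "s = (norm (D x))\<^sup>2"
  define Q where "Q = Re (cinner (D x) (D (D x)))"
  have "s > 0" using \<open>D x \<noteq> 0\<close> by (simp add: s_def)
  have "Q \<ge> 0" unfolding Q_def using assms(1) by (rule positive_op_nonneg)
  define t where "t = s / (Q + 1)"
  have "t > 0" using \<open>s > 0\<close> \<open>Q \<ge> 0\<close> by (simp add: t_def)
  have "2 * t * s \<le> t\<^sup>2 * Q"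
    using positive_op_quadratic_bound[OF assms(1), of t x] assms(2) by (simp add: s_def Q_def)
  then have "2 * s \<le> t * Q" using \<open>t > 0\<close> by (simp add: power2_eq_square mult.assoc)
  also have "t * Q < s" using \<open>s > 0\<close> \<open>Q \<ge> 0\<close> by (simp add: t_def field_simps)
  finally show False using \<open>s > 0\<close> by simp
qed

locale positive_contraction =
  fixes D :: "'a::complex_inner \<Rightarrow> 'a"
  assumes positive: "positive_op D"
    and form_le: "\<And>x. Re (cinner x (D x)) \<le> (norm x)\<^sup>2"
begin

lemma bounded_clinear: "bounded_clinear D"
  by (rule positive_op_bounded_clinear[OF positive])

lemma power2_norm_le_form: "(norm (D x))\<^sup>2 \<le> Re (cinner x (D x))"
  using positive_op_quadratic_bound[OF positive, of 1 x] form_le[of "D x"] by simp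

lemma norm_le: "norm (D x) \<le> norm x"
proof -
  have "(norm (D x))\<^sup>2 \<le> (norm x)\<^sup>2" by (rule order_trans[OF power2_norm_le_form form_le])
  then show ?thesis by (rule power2_le_imp_le) simp
qed

lemma positive_op_complement: "positive_op (\<lambda>x. x - D x)"
proof (rule positive_opI)
  show "bounded_clinear (\<lambda>x. x - D x)" by (rule bounded_clinear_diff[OF bounded_clinear_ident bounded_clinear])
  show "hermitian (\<lambda>x. x - D x)"
    using positive_op_hermitian[OF positive] by (simp add: hermitian_def cinner_diff_left cinner_diff_right)
  show "0 \<le> Re (cinner x (x - D x))" for x
    using form_le[of x] by (simp add: cinner_diff_right Re_cinner_self)
qed

end

section \<open>Square roots of \<open>I - B\<close> for \<open>0 \<le> B \<le> I\<close>\<close>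

inductive_set nonneg_poly :: "('a::complex_inner \<Rightarrow> 'a) \<Rightarrow> ('a \<Rightarrow> 'a) set" for B
where
  zero: "(\<lambda>x. 0) \<in> nonneg_poly B"
| power: "B ^^ n \<in> nonneg_poly B"
| add: "P \<in> nonneg_poly B \<Longrightarrow> Q \<in> nonneg_poly B \<Longrightarrow> (\<lambda>x. P x + Q x) \<in> nonneg_poly B"
| scale: "0 \<le> c \<Longrightarrow> P \<in> nonneg_poly B \<Longrightarrow> (\<lambda>x. scaleR c (P x)) \<in> nonneg_poly B"

lemma nonneg_poly_bounded_clinear:
  assumes "bounded_clinear B" and "P \<in> nonneg_poly B"
  shows "bounded_clinear P"
  using assms(2)
  by induction (auto intro: bounded_clinear_zero bounded_clinear_funpow[OF assms(1)]
      bounded_clinear_add bounded_clinear_scaleR)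

lemma nonneg_poly_commute:
  assumes C: "bounded_clinear C" and CB: "\<And>x. C (B x) = B (C x)" and "P \<in> nonneg_poly B"
  shows "C (P x) = P (C x)"
proof -
  have "C ((B ^^ n) x) = (B ^^ n) (C x)" for n x
    by (induction n) (simp_all add: CB)
  with assms(3) show ?thesis
    by (induction arbitrary: x) (simp_all add: clinear_zero[OF C] clinear_add[OF C] clinear_scaleR[OF C])
qed

lemma nonneg_poly_compose:
  assumes B: "bounded_clinear B" and "P \<in> nonneg_poly B" and Q: "Q \<in> nonneg_poly B"
  shows "(\<lambda>x. P (Q x)) \<in> nonneg_poly B"
  using assms(2)
proof induction
  case zero
  show ?case by (rule nonneg_poly.zero)
next
  case (power n)
  have Bn: "bounded_clinear (B ^^ n)" by (rule bounded_clinear_funpow[OF B])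
  from Q show ?case
  proof induction
    case zero
    show ?case using nonneg_poly.zero by (simp add: clinear_zero[OF Bn])
  next
    case (power m)
    show ?case using nonneg_poly.power[where n="n + m"] by (simp add: funpow_add comp_def)
  next
    case (add P Q)
    then show ?case using nonneg_poly.add by (simp add: clinear_add[OF Bn])
  next
    case (scale c P)
    then show ?case using nonneg_poly.scale by (simp add: clinear_scaleR[OF Bn])
  qed
next
  case (add P1 P2)
  from add.IH show ?case by (rule nonneg_poly.add)
next
  case (scale c P)
  from scale.hyps(1) scale.IH show ?case by (rule nonneg_poly.scale)
qed

lemma hermitian_funpow:
  assumes "hermitian B"
  shows "hermitian (B ^^ n)"
proof (induction n)
  case (Suc n)
  have "cinner ((B ^^ Suc n) u) v = cinner u ((B ^^ Suc n) v)" for u v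
  proof -
    have "cinner ((B ^^ Suc n) u) v = cinner ((B ^^ n) u) (B v)"
      using assms by (simp add: hermitian_def)
    also have "\<dots> = cinner u ((B ^^ n) (B v))"
      using Suc.IH by (simp add: hermitian_def)
    finally show ?thesis by (simp add: funpow_swap1)
  qed
  then show ?case by (simp add: hermitian_def)
qed (simp add: hermitian_def)

lemma positive_op_funpow:
  assumes "positive_op B"
  shows "positive_op (B ^^ n)"
proof (rule positive_opI)
  have B: "bounded_clinear B" and h: "\<And>j. hermitian (B ^^ j)"
    using assms positive_op_hermitian hermitian_funpow by (auto simp: positive_op_def)
  show "bounded_clinear (B ^^ n)" by (rule bounded_clinear_funpow[OF B])
  show "hermitian (B ^^ n)" by (rule h)
  fix x
  have "\<exists>j. n = j + j \<or> n = Suc (j + j)" by presburger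
  then obtain j where "n = j + j \<or> n = Suc (j + j)" by blast
  then show "0 \<le> Re (cinner x ((B ^^ n) x))"
  proof
    assume "n = j + j"
    then have "cinner x ((B ^^ n) x) = cinner ((B ^^ j) x) ((B ^^ j) x)"
      using h[of j] by (simp add: funpow_add hermitian_def)
    then show ?thesis by (simp add: Re_cinner_self)
  next
    assume "n = Suc (j + j)"
    then have "cinner x ((B ^^ n) x) = cinner ((B ^^ j) x) (B ((B ^^ j) x))"
      using h[of j] by (simp add: funpow_add funpow_swap1 hermitian_def)
    then show ?thesis using positive_op_nonneg[OF assms] by simp
  qed
qed

lemma positive_op_add:
  assumes P: "positive_op P" and Q: "positive_op Q"
  shows "positive_op (\<lambda>x. P x + Q x)"
proof (rule positive_opI)
  show "bounded_clinear (\<lambda>x. P x + Q x)"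
    using P Q by (intro bounded_clinear_add) (simp_all add: positive_op_bounded_clinear)
  show "hermitian (\<lambda>x. P x + Q x)"
    using positive_op_hermitian[OF P] positive_op_hermitian[OF Q]
    by (simp add: hermitian_def cinner_add_left cinner_add_right)
  show "0 \<le> Re (cinner x (P x + Q x))" for x
    using positive_op_nonneg[OF P, of x] positive_op_nonneg[OF Q, of x] by (simp add: cinner_add_right)
qed

lemma positive_op_scaleR:
  assumes "0 \<le> c" and P: "positive_op P"
  shows "positive_op (\<lambda>x. scaleR c (P x))"
proof (rule positive_opI)
  show "bounded_clinear (\<lambda>x. scaleR c (P x))"
    using P by (intro bounded_clinear_scaleR) (simp add: positive_op_bounded_clinear)
  show "hermitian (\<lambda>x. scaleR c (P x))"
    using positive_op_hermitian[OF P] by (simp add: hermitian_def cinner_scaleR_left cinner_scaleR_right)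
  show "0 \<le> Re (cinner x (scaleR c (P x)))" for x
    using positive_op_nonneg[OF P, of x] \<open>0 \<le> c\<close> by (simp add: cinner_scaleR_right)
qed

lemma positive_op_nonneg_poly:
  assumes "positive_op B" and "P \<in> nonneg_poly B"
  shows "positive_op P"
  using assms(2)
proof induction
  case zero
  show ?case by (rule positive_opI) (simp_all add: bounded_clinear_zero hermitian_def)
qed (simp_all add: positive_op_funpow[OF assms(1)] positive_op_add positive_op_scaleR)

text \<open>If \<open>H = I - Z\<close> then \<open>H\<^sup>2 = I - B\<close> amounts to \<open>Z = (B + Z\<^sup>2) / 2\<close>; the square root is
  obtained from the fixed-point iteration for this equation, started at \<open>0\<close>.\<close>

primrec sqrt_iter :: "('a::complex_inner \<Rightarrow> 'a) \<Rightarrow> nat \<Rightarrow> 'a \<Rightarrow> 'a" where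
  "sqrt_iter B 0 = (\<lambda>x. 0)"
| "sqrt_iter B (Suc k) = (\<lambda>x. scaleR (1/2) (B x + sqrt_iter B k (sqrt_iter B k x)))"

declare sqrt_iter.simps(2) [simp del]

context
  fixes B :: "'a::complex_inner \<Rightarrow> 'a"
  assumes B: "bounded_clinear B"
begin

lemma nonneg_poly_self: "B \<in> nonneg_poly B"
  using nonneg_poly.power[where n="Suc 0"] by simp

lemma sqrt_iter_nonneg_poly: "sqrt_iter B k \<in> nonneg_poly B"
proof (induction k)
  case (Suc k)
  have "(\<lambda>x. B x + sqrt_iter B k (sqrt_iter B k x)) \<in> nonneg_poly B"
    by (intro nonneg_poly.add nonneg_poly_self nonneg_poly_compose[OF B Suc.IH Suc.IH])
  then show ?case by (simp add: sqrt_iter.simps(2) nonneg_poly.scale)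
qed (simp add: nonneg_poly.zero)

lemma bounded_clinear_sqrt_iter: "bounded_clinear (sqrt_iter B k)"
  by (rule nonneg_poly_bounded_clinear[OF B sqrt_iter_nonneg_poly])

lemma sqrt_iter_commute:
  assumes "bounded_clinear C" and "\<And>x. C (B x) = B (C x)"
  shows "C (sqrt_iter B k x) = sqrt_iter B k (C x)"
  using nonneg_poly_commute[OF assms(1) _ sqrt_iter_nonneg_poly] assms(2) by blast

lemma sqrt_iter_commute_self: "B (sqrt_iter B k x) = sqrt_iter B k (B x)"
  by (rule sqrt_iter_commute[OF B]) simp

text \<open>The increments are again polynomials with non-negative coefficients, since
  \<open>Z\<^sub>k\<^sub>+\<^sub>2 - Z\<^sub>k\<^sub>+\<^sub>1 = (Z\<^sub>k\<^sub>+\<^sub>1 + Z\<^sub>k) (Z\<^sub>k\<^sub>+\<^sub>1 - Z\<^sub>k) / 2\<close>.\<close>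

lemma sqrt_iter_step_nonneg_poly: "(\<lambda>x. sqrt_iter B (Suc k) x - sqrt_iter B k x) \<in> nonneg_poly B"
proof (induction k)
  case 0
  have "(\<lambda>x. scaleR (1/2) (B x)) \<in> nonneg_poly B"
    by (simp add: nonneg_poly.scale nonneg_poly_self)
  then show ?case by (simp add: sqrt_iter.simps(2))
next
  case (Suc k)
  define A where "A = sqrt_iter B (Suc k)"
  define C where "C = sqrt_iter B k"
  have A: "bounded_clinear A" and C: "bounded_clinear C"
    by (simp_all add: A_def C_def bounded_clinear_sqrt_iter)
  have AC: "A (C x) = C (A x)" for x
    unfolding C_def A_def
    by (rule sqrt_iter_commute[OF bounded_clinear_sqrt_iter]) (rule sqrt_iter_commute_self[symmetric])
  have "(\<lambda>y. A y + C y) \<in> nonneg_poly B"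
    unfolding A_def C_def by (intro nonneg_poly.add sqrt_iter_nonneg_poly)
  from nonneg_poly_compose[OF B this Suc.IH[folded A_def C_def]]
  have "(\<lambda>x. scaleR (1/2) (A (A x - C x) + C (A x - C x))) \<in> nonneg_poly B"
    by (rule nonneg_poly.scale[rotated]) simp
  moreover have "scaleR (1/2) (A (A x - C x) + C (A x - C x)) = sqrt_iter B (Suc (Suc k)) x - A x"
    for x
  proof -
    have "sqrt_iter B (Suc (Suc k)) x = scaleR (1/2) (B x + A (A x))"
      by (simp add: A_def sqrt_iter.simps(2)[of B "Suc k"])
    moreover have "A x = scaleR (1/2) (B x + C (C x))"
      by (simp add: A_def C_def sqrt_iter.simps(2))
    ultimately have "sqrt_iter B (Suc (Suc k)) x - A x = scaleR (1/2) (A (A x) - C (C x))"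
      by (metis scaleR_right_diff_distrib add_diff_cancel_left)
    then show ?thesis by (simp add: clinear_diff[OF A] clinear_diff[OF C] AC algebra_simps)
  qed
  ultimately show ?case by (simp add: A_def)
qed

lemma sqrt_iter_diff_nonneg_poly:
  "n \<le> m \<Longrightarrow> (\<lambda>x. sqrt_iter B m x - sqrt_iter B n x) \<in> nonneg_poly B"
proof (induction m rule: dec_induct)
  case base
  show ?case using nonneg_poly.zero by simp
next
  case (step m)
  from nonneg_poly.add[OF sqrt_iter_step_nonneg_poly[of m] step.IH]
  show ?case by simp
qed

end

definition sqrt_iter_lim :: "('a::chilbert_space \<Rightarrow> 'a) \<Rightarrow> 'a \<Rightarrow> 'a" where
  "sqrt_iter_lim B x = lim (\<lambda>k. sqrt_iter B k x)"

context positive_contraction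
begin

lemma positive_contraction_sqrt_iter: "positive_contraction (sqrt_iter D k)"
proof (induction k)
  case 0
  show ?case
    by unfold_locales (simp_all add: positive_op_nonneg_poly[OF positive nonneg_poly.zero])
next
  case (Suc k)
  let ?Z = "sqrt_iter D k"
  have "Re (cinner y (sqrt_iter D (Suc k) y)) \<le> (norm y)\<^sup>2" for y
  proof -
    have "cinner y (?Z (?Z y)) = cinner (?Z y) (?Z y)"
      using positive_op_hermitian[OF positive_contraction.positive[OF Suc.IH]]
      by (simp add: hermitian_def)
    then have "Re (cinner y (sqrt_iter D (Suc k) y)) = (Re (cinner y (D y)) + (norm (?Z y))\<^sup>2) / 2"
      by (simp add: sqrt_iter.simps(2) cinner_scaleR_right cinner_add_right Re_cinner_self)
    moreover have "(norm (?Z y))\<^sup>2 \<le> (norm y)\<^sup>2"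
      using positive_contraction.norm_le[OF Suc.IH, of y] by (simp add: power_mono)
    ultimately show ?thesis using form_le[of y] by argo
  qed
  then show ?case
    by unfold_locales
       (simp_all add: positive_op_nonneg_poly[OF positive sqrt_iter_nonneg_poly[OF bounded_clinear]])
qed

text \<open>For \<open>n \<le> m\<close> the difference \<open>Z\<^sub>m - Z\<^sub>n\<close> is itself a positive contraction.\<close>

lemma power2_norm_sqrt_iter_diff_le:
  assumes "n \<le> m"
  shows "(norm (sqrt_iter D m x - sqrt_iter D n x))\<^sup>2
    \<le> Re (cinner x (sqrt_iter D m x)) - Re (cinner x (sqrt_iter D n x))"
proof -
  have "positive_contraction (\<lambda>y. sqrt_iter D m y - sqrt_iter D n y)"
  proof
    show "positive_op (\<lambda>y. sqrt_iter D m y - sqrt_iter D n y)"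
      by (rule positive_op_nonneg_poly[OF positive sqrt_iter_diff_nonneg_poly[OF bounded_clinear assms]])
    show "Re (cinner y (sqrt_iter D m y - sqrt_iter D n y)) \<le> (norm y)\<^sup>2" for y
      using positive_contraction.form_le[OF positive_contraction_sqrt_iter, of y m]
        positive_op_nonneg[OF positive_contraction.positive[OF positive_contraction_sqrt_iter], of y n]
      by (simp add: cinner_diff_right)
  qed
  from positive_contraction.power2_norm_le_form[OF this, of x] show ?thesis
    by (simp add: cinner_diff_right)
qed

lemma Cauchy_sqrt_iter: "Cauchy (\<lambda>k. sqrt_iter D k x)"
proof (rule metric_CauchyI)
  define a where "a k = Re (cinner x (sqrt_iter D k x))" for k
  have "a n \<le> a m" if "n \<le> m" for n m
    using power2_norm_sqrt_iter_diff_le[OF that, of x] unfolding a_def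
    by (smt (verit) zero_le_power2)
  moreover have "a k \<le> (norm x)\<^sup>2" for k
    unfolding a_def by (rule positive_contraction.form_le[OF positive_contraction_sqrt_iter])
  ultimately have "convergent a"
    by (intro Bseq_monoseq_convergent BseqI'[of _ "(norm x)\<^sup>2"] monoI1)
       (auto simp: a_def positive_op_nonneg[OF positive_contraction.positive[OF positive_contraction_sqrt_iter]])
  then have Ca: "Cauchy a" by (simp add: Cauchy_convergent_iff)
  fix e :: real assume "0 < e"
  then obtain N where N: "\<And>m n. N \<le> m \<Longrightarrow> N \<le> n \<Longrightarrow> dist (a m) (a n) < e\<^sup>2"
    using Ca unfolding Cauchy_def by (meson zero_less_power)
  have "dist (sqrt_iter D m x) (sqrt_iter D n x) < e" if "N \<le> m" "N \<le> n" "n \<le> m" for m n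
  proof -
    have "(norm (sqrt_iter D m x - sqrt_iter D n x))\<^sup>2 < e\<^sup>2"
      using power2_norm_sqrt_iter_diff_le[OF that(3), of x] N[OF that(1,2)]
      by (simp add: a_def dist_real_def)
    then show ?thesis using \<open>0 < e\<close> by (simp add: dist_norm power_less_imp_less_base)
  qed
  then show "\<exists>M. \<forall>m\<ge>M. \<forall>n\<ge>M. dist (sqrt_iter D m x) (sqrt_iter D n x) < e"
    by (metis dist_commute nle_le)
qed

end

context
  fixes B :: "'a::chilbert_space \<Rightarrow> 'a"
  assumes B: "positive_contraction B"
begin

lemma sqrt_iter_tendsto: "(\<lambda>k. sqrt_iter B k x) \<longlonglongrightarrow> sqrt_iter_lim B x"
  unfolding sqrt_iter_lim_def
  using positive_contraction.Cauchy_sqrt_iter[OF B] Cauchy_convergent_iff convergent_LIMSEQ_iff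
  by blast

lemma sqrt_iter_lim_eqI: "(\<lambda>k. sqrt_iter B k x) \<longlonglongrightarrow> y \<Longrightarrow> sqrt_iter_lim B x = y"
  using sqrt_iter_tendsto LIMSEQ_unique by blast

lemma sqrt_iter_lim_commute:
  assumes C: "bounded_clinear C" and CB: "\<And>x. C (B x) = B (C x)"
  shows "C (sqrt_iter_lim B x) = sqrt_iter_lim B (C x)"
proof (rule sqrt_iter_lim_eqI[symmetric])
  have "(\<lambda>k. C (sqrt_iter B k x)) \<longlonglongrightarrow> C (sqrt_iter_lim B x)"
    by (rule clinear_tendsto[OF C sqrt_iter_tendsto])
  then show "(\<lambda>k. sqrt_iter B k (C x)) \<longlonglongrightarrow> C (sqrt_iter_lim B x)"
    using sqrt_iter_commute[OF positive_contraction.bounded_clinear[OF B] C] CB by simp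
qed

lemma bounded_clinear_sqrt_iter_lim: "bounded_clinear (sqrt_iter_lim B)"
proof (rule bounded_clinearI[of _ 1])
  note Z = positive_contraction.positive_contraction_sqrt_iter[OF B]
  fix x y
  show "sqrt_iter_lim B (x + y) = sqrt_iter_lim B x + sqrt_iter_lim B y"
    using tendsto_add[OF sqrt_iter_tendsto[of x] sqrt_iter_tendsto[of y]]
    by (intro sqrt_iter_lim_eqI) (simp add: clinear_add[OF positive_contraction.bounded_clinear[OF Z]])
  fix c
  show "sqrt_iter_lim B (scaleC c x) = scaleC c (sqrt_iter_lim B x)"
    using clinear_tendsto[OF bounded_clinear_scaleC_op sqrt_iter_tendsto[of x]]
    by (intro sqrt_iter_lim_eqI) (simp add: clinear_scaleC[OF positive_contraction.bounded_clinear[OF Z]])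
  have "(\<lambda>k. norm (sqrt_iter B k x)) \<longlonglongrightarrow> norm (sqrt_iter_lim B x)"
    by (intro tendsto_norm sqrt_iter_tendsto)
  then show "norm (sqrt_iter_lim B x) \<le> norm x * 1"
    using positive_contraction.norm_le[OF Z] by (simp add: LIMSEQ_le_const2)
qed

lemma hermitian_sqrt_iter_lim: "hermitian (sqrt_iter_lim B)"
  unfolding hermitian_def
proof (intro allI)
  fix u v
  have "(\<lambda>k. cinner (sqrt_iter B k u) v) \<longlonglongrightarrow> cinner (sqrt_iter_lim B u) v"
    "(\<lambda>k. cinner u (sqrt_iter B k v)) \<longlonglongrightarrow> cinner u (sqrt_iter_lim B v)"
    by (intro tendsto_cinner sqrt_iter_tendsto tendsto_const)+
  moreover have "cinner (sqrt_iter B k u) v = cinner u (sqrt_iter B k v)" for k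
    using positive_op_hermitian[OF positive_contraction.positive[OF
        positive_contraction.positive_contraction_sqrt_iter[OF B]]]
    by (simp add: hermitian_def)
  ultimately show "cinner (sqrt_iter_lim B u) v = cinner u (sqrt_iter_lim B v)"
    using LIMSEQ_unique by fastforce
qed

lemma positive_contraction_sqrt_iter_lim: "positive_contraction (sqrt_iter_lim B)"
proof
  note Z = positive_contraction.positive_contraction_sqrt_iter[OF B]
  have form: "(\<lambda>k. Re (cinner x (sqrt_iter B k x))) \<longlonglongrightarrow> Re (cinner x (sqrt_iter_lim B x))" for x
    by (intro tendsto_Re tendsto_cinner sqrt_iter_tendsto tendsto_const)
  have "0 \<le> Re (cinner x (sqrt_iter_lim B x))" for x
    using LIMSEQ_le_const[OF form[of x], of 0]
      positive_op_nonneg[OF positive_contraction.positive[OF Z]] by blast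
  with bounded_clinear_sqrt_iter_lim hermitian_sqrt_iter_lim show "positive_op (sqrt_iter_lim B)"
    by (rule positive_opI)
  show "Re (cinner x (sqrt_iter_lim B x)) \<le> (norm x)\<^sup>2" for x
    using LIMSEQ_le_const2[OF form[of x], of "(norm x)\<^sup>2"] positive_contraction.form_le[OF Z]
    by blast
qed

lemma sqrt_iter_lim_fixpoint:
  "sqrt_iter_lim B x = scaleR (1/2) (B x + sqrt_iter_lim B (sqrt_iter_lim B x))"
proof -
  let ?L = "sqrt_iter_lim B"
  note Z = positive_contraction.positive_contraction_sqrt_iter[OF B]
  have "(\<lambda>k. sqrt_iter B k (sqrt_iter B k x - ?L x)) \<longlonglongrightarrow> 0"
  proof (rule tendsto_0_le[where K=1])
    show "(\<lambda>k. sqrt_iter B k x - ?L x) \<longlonglongrightarrow> 0"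
      using sqrt_iter_tendsto[of x] by (simp add: LIM_zero)
  qed (simp add: positive_contraction.norm_le[OF Z])
  moreover have "(\<lambda>k. sqrt_iter B k (?L x)) \<longlonglongrightarrow> ?L (?L x)"
    by (rule sqrt_iter_tendsto)
  ultimately have "(\<lambda>k. sqrt_iter B k (sqrt_iter B k x - ?L x) + sqrt_iter B k (?L x))
      \<longlonglongrightarrow> 0 + ?L (?L x)"
    by (rule tendsto_add)
  then have "(\<lambda>k. sqrt_iter B k (sqrt_iter B k x)) \<longlonglongrightarrow> ?L (?L x)"
    by (simp add: clinear_diff[OF positive_contraction.bounded_clinear[OF Z]])
  then have "(\<lambda>k. sqrt_iter B (Suc k) x) \<longlonglongrightarrow> scaleR (1/2) (B x + ?L (?L x))"
    unfolding sqrt_iter.simps(2) by (intro tendsto_scaleR tendsto_add tendsto_const)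
  then show ?thesis
    by (rule sqrt_iter_lim_eqI[OF LIMSEQ_imp_Suc])
qed

lemma sqrt_iter_lim_complement_square:
  "(\<lambda>x. x - sqrt_iter_lim B x) (x - sqrt_iter_lim B x) = x - B x"
proof -
  have "scaleR 2 (sqrt_iter_lim B x) = B x + sqrt_iter_lim B (sqrt_iter_lim B x)"
    by (subst sqrt_iter_lim_fixpoint) simp
  then show ?thesis
    using positive_contraction.bounded_clinear[OF positive_contraction_sqrt_iter_lim]
    by (simp add: clinear_diff scaleR_2 algebra_simps)
qed

text \<open>Uniqueness of the positive square root: two positive square roots \<open>C\<close>, \<open>H\<close> commute,
  so \<open>C + H\<close> annihilates \<open>y = C x - H x\<close>; positivity then gives \<open>C y = H y = 0\<close>, whence
  \<open>\<langle>y, y\<rangle> = \<langle>x, C y - H y\<rangle> = 0\<close>.\<close>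

lemma positive_sqrt_complement_unique:
  assumes Cp: "positive_op C" and CC: "\<And>x. C (C x) = x - B x"
  shows "C = (\<lambda>x. x - sqrt_iter_lim B x)"
proof
  fix x
  define H where "H = (\<lambda>x. x - sqrt_iter_lim B x)"
  have Hp: "positive_op H"
    unfolding H_def by (rule positive_contraction.positive_op_complement[OF positive_contraction_sqrt_iter_lim])
  have C: "bounded_clinear C" and H: "bounded_clinear H"
    using Cp Hp by (simp_all add: positive_op_bounded_clinear)
  have HH: "H (H y) = y - B y" for y by (simp add: H_def sqrt_iter_lim_complement_square)
  have "C (B y) = B (C y)" for y
    using CC[of "C y"] CC[of y] by (simp add: clinear_diff[OF C])
  then have CH: "C (H y) = H (C y)" for y
    by (simp add: H_def clinear_diff[OF C] sqrt_iter_lim_commute[OF C])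
  define y where "y = C x - H x"
  have "C y + H y = 0"
    by (simp add: y_def clinear_diff[OF C] clinear_diff[OF H] CC HH CH)
  then have "Re (cinner y (C y)) + Re (cinner y (H y)) = 0"
    by (metis cinner_add_right cinner_zero_right plus_complex.sel(1) zero_complex.sel(1))
  moreover have "0 \<le> Re (cinner y (C y))" "0 \<le> Re (cinner y (H y))"
    using Cp Hp by (simp_all add: positive_op_nonneg)
  ultimately have "C y = 0" "H y = 0"
    using positive_op_eq_zero_if_form_zero[OF Cp, of y] positive_op_eq_zero_if_form_zero[OF Hp, of y]
    by linarith+
  have "cinner y y = cinner x (C y - H y)"
    using positive_op_hermitian[OF Cp] positive_op_hermitian[OF Hp]
    by (simp add: y_def hermitian_def cinner_diff_left cinner_diff_right clinear_diff[OF C] clinear_diff[OF H])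
  also have "\<dots> = 0" by (simp add: \<open>C y = 0\<close> \<open>H y = 0\<close>)
  finally show "C x = H x" by (simp add: y_def cinner_eq_zero_iff)
qed

lemma op_sqrt_complement_eq: "op_sqrt (\<lambda>x. x - B x) = (\<lambda>x. x - sqrt_iter_lim B x)"
  unfolding op_sqrt_def
proof (rule the_equality)
  show "positive_op (\<lambda>x. x - sqrt_iter_lim B x) \<and>
      (\<lambda>x. x - sqrt_iter_lim B x) \<circ> (\<lambda>x. x - sqrt_iter_lim B x) = (\<lambda>x. x - B x)"
    using positive_contraction.positive_op_complement[OF positive_contraction_sqrt_iter_lim]
      sqrt_iter_lim_complement_square by (simp add: fun_eq_iff)
qed (use positive_sqrt_complement_unique in \<open>simp add: fun_eq_iff\<close>)

lemma positive_op_sqrt_complement: "positive_op (op_sqrt (\<lambda>x. x - B x))"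
  unfolding op_sqrt_complement_eq
  by (rule positive_contraction.positive_op_complement[OF positive_contraction_sqrt_iter_lim])

lemma sqrt_complement_square: "op_sqrt (\<lambda>x. x - B x) (op_sqrt (\<lambda>x. x - B x) x) = x - B x"
  unfolding op_sqrt_complement_eq by (rule sqrt_iter_lim_complement_square)

lemma sqrt_complement_commute:
  assumes "bounded_clinear C" and "\<And>x. C (B x) = B (C x)"
  shows "C (op_sqrt (\<lambda>x. x - B x) x) = op_sqrt (\<lambda>x. x - B x) (C x)"
  unfolding op_sqrt_complement_eq using assms
  by (simp add: clinear_diff sqrt_iter_lim_commute)

end

section \<open>Factoring an operator through a dominating one\<close>

text \<open>If \<open>\<parallel>F x\<parallel> \<le> \<parallel>H x\<parallel>\<close>, then \<open>H x \<mapsto> F x\<close> is a well-defined contraction on the range of \<open>H\<close>;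
  it extends by continuity to the closure of the range.\<close>

definition range_extension :: "('a::real_normed_vector \<Rightarrow> 'a) \<Rightarrow> ('a \<Rightarrow> 'a) \<Rightarrow> 'a \<Rightarrow> 'a" where
  "range_extension H F w = (THE L. \<forall>x. (\<lambda>k. H (x k)) \<longlonglongrightarrow> w \<longrightarrow> (\<lambda>k. F (x k)) \<longlonglongrightarrow> L)"

locale dominated =
  fixes H F :: "'a::chilbert_space \<Rightarrow> 'a"
  assumes H: "bounded_clinear H" and F: "bounded_clinear F"
    and dominated: "\<And>x. norm (F x) \<le> norm (H x)"
begin

lemma dist_le: "dist (F x) (F y) \<le> dist (H x) (H y)"
  using dominated[of "x - y"] by (simp add: dist_norm clinear_diff[OF F] clinear_diff[OF H])

lemma tendsto_range_extension:
  assumes w: "w \<in> closure (range H)" and x: "(\<lambda>k. H (x k)) \<longlonglongrightarrow> w"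
  shows "(\<lambda>k. F (x k)) \<longlonglongrightarrow> range_extension H F w"
proof -
  obtain x0 where x0: "(\<lambda>k. H (x0 k)) \<longlonglongrightarrow> w" by (rule closure_range_tendsto[OF w])
  have "Cauchy (\<lambda>k. F (x0 k))"
  proof (rule metric_CauchyI)
    fix e :: real assume "0 < e"
    then obtain N where N: "\<And>m n. N \<le> m \<Longrightarrow> N \<le> n \<Longrightarrow> dist (H (x0 m)) (H (x0 n)) < e"
      using LIMSEQ_imp_Cauchy[OF x0] unfolding Cauchy_def by blast
    show "\<exists>M. \<forall>m\<ge>M. \<forall>n\<ge>M. dist (F (x0 m)) (F (x0 n)) < e"
    proof (intro exI allI impI)
      fix m n assume "N \<le> m" "N \<le> n"
      with N dist_le[of "x0 m" "x0 n"] show "dist (F (x0 m)) (F (x0 n)) < e" by fastforce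
    qed
  qed
  then obtain L where L: "(\<lambda>k. F (x0 k)) \<longlonglongrightarrow> L"
    using Cauchy_convergent_iff convergent_def by blast
  have lim: "(\<lambda>k. F (y k)) \<longlonglongrightarrow> L" if y: "(\<lambda>k. H (y k)) \<longlonglongrightarrow> w" for y
  proof -
    have "(\<lambda>k. H (y k) - H (x0 k)) \<longlonglongrightarrow> 0"
      using tendsto_diff[OF y x0] by simp
    then have "(\<lambda>k. F (y k) - F (x0 k)) \<longlonglongrightarrow> 0"
      by (rule tendsto_0_le[where K=1])
         (simp add: dominated flip: clinear_diff[OF F] clinear_diff[OF H])
    from tendsto_add[OF this L] show ?thesis by simp
  qed
  have "range_extension H F w = L"
    unfolding range_extension_def
  proof (rule the_equality)
    fix L' assume "\<forall>y. (\<lambda>k. H (y k)) \<longlonglongrightarrow> w \<longrightarrow> (\<lambda>k. F (y k)) \<longlonglongrightarrow> L'"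
    with x0 L show "L' = L" using LIMSEQ_unique by blast
  qed (use lim in blast)
  with lim[OF x] show ?thesis by simp
qed

lemma range_extension_apply: "range_extension H F (H x) = F x"
proof -
  have "H x \<in> closure (range H)" by (rule closure_subset[THEN subsetD, OF rangeI])
  from tendsto_range_extension[OF this, of "\<lambda>k. x"] show ?thesis
    by (simp add: LIMSEQ_const_iff)
qed

lemma csubspace_closure_range: "csubspace (closure (range H))"
  by (rule csubspace_closure[OF csubspace_range[OF H]])

lemma range_extension_add:
  assumes "w \<in> closure (range H)" "w' \<in> closure (range H)"
  shows "range_extension H F (w + w') = range_extension H F w + range_extension H F w'"
proof -
  obtain x where x: "(\<lambda>k. H (x k)) \<longlonglongrightarrow> w" by (rule closure_range_tendsto[OF assms(1)])
  obtain y where y: "(\<lambda>k. H (y k)) \<longlonglongrightarrow> w'" by (rule closure_range_tendsto[OF assms(2)])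
  have "(\<lambda>k. H (x k + y k)) \<longlonglongrightarrow> w + w'"
    using tendsto_add[OF x y] by (simp add: clinear_add[OF H])
  then have "(\<lambda>k. F (x k + y k)) \<longlonglongrightarrow> range_extension H F (w + w')"
    by (rule tendsto_range_extension[OF csubspace_add[OF csubspace_closure_range assms]])
  moreover have "(\<lambda>k. F (x k + y k)) \<longlonglongrightarrow> range_extension H F w + range_extension H F w'"
    using tendsto_add[OF tendsto_range_extension[OF assms(1) x] tendsto_range_extension[OF assms(2) y]]
    by (simp add: clinear_add[OF F])
  ultimately show ?thesis using LIMSEQ_unique by blast
qed

lemma range_extension_scaleC:
  assumes "w \<in> closure (range H)"
  shows "range_extension H F (scaleC c w) = scaleC c (range_extension H F w)"
proof -
  obtain x where x: "(\<lambda>k. H (x k)) \<longlonglongrightarrow> w" by (rule closure_range_tendsto[OF assms])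
  have "(\<lambda>k. H (scaleC c (x k))) \<longlonglongrightarrow> scaleC c w"
    using clinear_tendsto[OF bounded_clinear_scaleC_op x] by (simp add: clinear_scaleC[OF H])
  then have "(\<lambda>k. F (scaleC c (x k))) \<longlonglongrightarrow> range_extension H F (scaleC c w)"
    by (rule tendsto_range_extension[OF csubspace_scaleC[OF csubspace_closure_range assms]])
  moreover have "(\<lambda>k. F (scaleC c (x k))) \<longlonglongrightarrow> scaleC c (range_extension H F w)"
    using clinear_tendsto[OF bounded_clinear_scaleC_op tendsto_range_extension[OF assms x]]
    by (simp add: clinear_scaleC[OF F])
  ultimately show ?thesis using LIMSEQ_unique by blast
qed

lemma norm_range_extension_le:
  assumes "w \<in> closure (range H)"
  shows "norm (range_extension H F w) \<le> norm w"
proof -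
  obtain x where x: "(\<lambda>k. H (x k)) \<longlonglongrightarrow> w" by (rule closure_range_tendsto[OF assms])
  show ?thesis
    by (rule LIMSEQ_le[OF tendsto_norm[OF tendsto_range_extension[OF assms x]] tendsto_norm[OF x]])
       (simp add: dominated)
qed

lemma range_extension_commute:
  assumes w: "w \<in> closure (range H)" and A: "bounded_clinear A"
    and AH: "\<And>x. A (H x) = H (A x)" and AF: "\<And>x. A (F x) = F (A x)"
  shows "range_extension H F (A w) = A (range_extension H F w)"
proof -
  obtain x where x: "(\<lambda>k. H (x k)) \<longlonglongrightarrow> w" by (rule closure_range_tendsto[OF w])
  have "(\<lambda>k. H (A (x k))) \<longlonglongrightarrow> A w" using clinear_tendsto[OF A x] by (simp add: AH)
  then have "(\<lambda>k. F (A (x k))) \<longlonglongrightarrow> range_extension H F (A w)"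
    by (rule tendsto_range_extension[OF closure_range_invariant[where A=A and H=H, OF A AH w]])
  moreover have "(\<lambda>k. F (A (x k))) \<longlonglongrightarrow> A (range_extension H F w)"
    using clinear_tendsto[OF A tendsto_range_extension[OF w x]] by (simp add: AF)
  ultimately show ?thesis using LIMSEQ_unique by blast
qed

end

definition dominated_factor :: "('a::chilbert_space \<Rightarrow> 'a) \<Rightarrow> ('a \<Rightarrow> 'a) \<Rightarrow> 'a \<Rightarrow> 'a" where
  "dominated_factor H F z = range_extension H F (orth_proj (closure (range H)) z)"

context dominated
begin

sublocale range_closure: closed_csubspace "closure (range H)"
  by unfold_locales (simp_all add: csubspace_closure_range)

lemma bounded_clinear_dominated_factor: "bounded_clinear (dominated_factor H F)"
proof (rule bounded_clinearI[of _ 1])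
  note P = range_closure.bounded_clinear_orth_proj and PM = range_closure.orth_proj_in
  show "dominated_factor H F (x + y) = dominated_factor H F x + dominated_factor H F y" for x y
    by (simp add: dominated_factor_def clinear_add[OF P] range_extension_add[OF PM PM])
  show "dominated_factor H F (scaleC c x) = scaleC c (dominated_factor H F x)" for c x
    by (simp add: dominated_factor_def clinear_scaleC[OF P] range_extension_scaleC[OF PM])
  show "norm (dominated_factor H F x) \<le> norm x * 1" for x
    using order_trans[OF norm_range_extension_le[OF PM] range_closure.norm_orth_proj_le]
    by (simp add: dominated_factor_def)
qed

lemma dominated_factor_comp: "F = dominated_factor H F \<circ> H"
proof
  fix x
  have "H x \<in> closure (range H)" by (rule closure_subset[THEN subsetD, OF rangeI])
  then show "F x = (dominated_factor H F \<circ> H) x"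
    by (simp add: dominated_factor_def range_closure.orth_proj_id range_extension_apply)
qed

lemma dominated_factor_commute:
  assumes A: "bounded_clinear A" and AH: "\<And>x. A (H x) = H (A x)" and AF: "\<And>x. A (F x) = F (A x)"
    and A'H: "\<And>x. cadjoint A (H x) = H (cadjoint A x)"
  shows "dominated_factor H F (A z) = A (dominated_factor H F z)"
proof -
  have "orth_proj (closure (range H)) (A z) = A (orth_proj (closure (range H)) z)"
    using closure_range_invariant[where A=A and H=H, OF A AH]
      closure_range_invariant[where A="cadjoint A" and H=H, OF bounded_clinear_cadjoint[OF A] A'H]
    by (rule range_closure.orth_proj_commute[OF A])
  then show ?thesis
    by (simp add: dominated_factor_def range_extension_commute[where A=A, OF range_closure.orth_proj_in A AH AF])
qed

end

lemma sum_cinner_range_extension: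
  fixes H :: "'a::chilbert_space \<Rightarrow> 'a"
  assumes dom: "\<And>i. i \<in> I \<Longrightarrow> dominated H (F i)"
    and sum_eq: "\<And>x y. (\<Sum>i\<in>I. cinner (F i x) (F i y)) = cinner (H x) (H y)"
    and w: "w \<in> closure (range H)" and w': "w' \<in> closure (range H)"
  shows "(\<Sum>i\<in>I. cinner (range_extension H (F i) w) (range_extension H (F i) w')) = cinner w w'"
proof -
  obtain x where x: "(\<lambda>k. H (x k)) \<longlonglongrightarrow> w" by (rule closure_range_tendsto[OF w])
  obtain y where y: "(\<lambda>k. H (y k)) \<longlonglongrightarrow> w'" by (rule closure_range_tendsto[OF w'])
  have "(\<lambda>k. \<Sum>i\<in>I. cinner (F i (x k)) (F i (y k)))
      \<longlonglongrightarrow> (\<Sum>i\<in>I. cinner (range_extension H (F i) w) (range_extension H (F i) w'))"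
    by (intro tendsto_sum tendsto_cinner dominated.tendsto_range_extension[OF dom] w w' x y)
  moreover have "(\<lambda>k. \<Sum>i\<in>I. cinner (F i (x k)) (F i (y k))) \<longlonglongrightarrow> cinner w w'"
    unfolding sum_eq by (rule tendsto_cinner[OF x y])
  ultimately show ?thesis using LIMSEQ_unique by blast
qed

lemma sum_cadjoint_dominated_factor:
  fixes H :: "'a::chilbert_space \<Rightarrow> 'a"
  assumes H: "bounded_clinear H" and dom: "\<And>i. i \<in> I \<Longrightarrow> dominated H (F i)"
    and sum_eq: "\<And>x y. (\<Sum>i\<in>I. cinner (F i x) (F i y)) = cinner (H x) (H y)"
  shows "(\<lambda>x. \<Sum>i\<in>I. cadjoint (dominated_factor H (F i)) (dominated_factor H (F i) x))
    = orth_proj (closure (range H))"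
proof (intro ext ext_cinner_left)
  interpret closed_csubspace "closure (range H)"
    by unfold_locales (simp_all add: csubspace_closure csubspace_range H)
  fix x v
  have "cinner (\<Sum>i\<in>I. cadjoint (dominated_factor H (F i)) (dominated_factor H (F i) x)) v
      = (\<Sum>i\<in>I. cinner (dominated_factor H (F i) x) (dominated_factor H (F i) v))"
    using dominated.bounded_clinear_dominated_factor[OF dom]
    by (simp add: cinner_sum_left cinner_cadjoint_left)
  also have "\<dots> = cinner (orth_proj (closure (range H)) x) (orth_proj (closure (range H)) v)"
    unfolding dominated_factor_def
    by (rule sum_cinner_range_extension[OF dom sum_eq orth_proj_in orth_proj_in])
  also have "\<dots> = cinner (orth_proj (closure (range H)) x) v"
    by (simp add: orth_proj_selfadjoint orth_proj_id orth_proj_in)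
  finally show "cinner (\<Sum>i\<in>I. cadjoint (dominated_factor H (F i)) (dominated_factor H (F i) x)) v
      = cinner (orth_proj (closure (range H)) x) v" .
qed

lemma dominated_if_sum_cinner_eq:
  fixes H :: "'a::chilbert_space \<Rightarrow> 'a"
  assumes "finite I" "i \<in> I" and H: "bounded_clinear H" and F: "bounded_clinear (F i)"
    and sum_eq: "\<And>x. (\<Sum>j\<in>I. cinner (F j x) (F j x)) = cinner (H x) (H x)"
  shows "dominated H (F i)"
proof
  fix x
  have "(norm (F i x))\<^sup>2 \<le> (\<Sum>j\<in>I. (norm (F j x))\<^sup>2)"
    using member_le_sum[of i I "\<lambda>j. (norm (F j x))\<^sup>2"] assms(1,2) by simp
  also have "\<dots> = (norm (H x))\<^sup>2"
    using arg_cong[OF sum_eq[of x], of Re] by (simp add: Re_cinner_self)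
  finally show "norm (F i x) \<le> norm (H x)" by (rule power2_le_imp_le) simp
qed (use H F in simp_all)

lemma cinner_sum_cadjoint:
  fixes T :: "nat \<Rightarrow> 'a::chilbert_space \<Rightarrow> 'a"
  assumes "\<And>j. j \<in> J \<Longrightarrow> bounded_clinear (T j)"
  shows "cinner x (\<Sum>j\<in>J. cadjoint (T j) (T j y)) = (\<Sum>j\<in>J. cinner (T j x) (T j y))"
  using assms by (simp add: cinner_sum_right cinner_cadjoint_right)

locale partition_of_identity =
  fixes T :: "nat \<Rightarrow> 'a::chilbert_space \<Rightarrow> 'a" and J :: "nat set" and n :: nat
  assumes finite: "finite J" and n: "n \<in> J" and bounded: "\<And>j. j \<in> J \<Longrightarrow> bounded_clinear (T j)"
    and sum_id: "\<And>x. (\<Sum>j\<in>J. cadjoint (T j) (T j x)) = x"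
begin

lemma sum_norm_power2: "(\<Sum>j\<in>J. (norm (T j x))\<^sup>2) = (norm x)\<^sup>2"
  using arg_cong[OF cinner_sum_cadjoint[where J=J and T=T and x=x and y=x, OF bounded], of Re]
  by (simp add: sum_id Re_cinner_self)

lemma positive_contraction: "positive_contraction (\<lambda>x. cadjoint (T n) (T n x))"
proof
  have Tn: "bounded_clinear (T n)" by (rule bounded[OF n])
  have form: "cinner x (cadjoint (T n) (T n x)) = of_real ((norm (T n x))\<^sup>2)" for x
    by (simp add: cinner_cadjoint_right[OF Tn] cinner_self_eq_norm_power2)
  show "positive_op (\<lambda>x. cadjoint (T n) (T n x))"
  proof (rule positive_opI)
    show "bounded_clinear (\<lambda>x. cadjoint (T n) (T n x))"
      by (rule bounded_clinear_compose[OF bounded_clinear_cadjoint[OF Tn] Tn])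
    show "hermitian (\<lambda>x. cadjoint (T n) (T n x))"
      by (simp add: hermitian_def cinner_cadjoint_left[OF Tn] cinner_cadjoint_right[OF Tn])
  qed (simp add: form)
  show "Re (cinner x (cadjoint (T n) (T n x))) \<le> (norm x)\<^sup>2" for x
    using member_le_sum[of n J "\<lambda>j. (norm (T j x))\<^sup>2"] finite n by (simp add: form sum_norm_power2)
qed

lemma sum_cinner_eq_sqrt_complement:
  defines "H \<equiv> op_sqrt (\<lambda>x. x - cadjoint (T n) (T n x))"
  shows "(\<Sum>j\<in>J - {n}. cinner (T j x) (T j y)) = cinner (H x) (H y)"
proof -
  have HH: "H (H y) = (\<Sum>j\<in>J - {n}. cadjoint (T j) (T j y))"
    using sum_id[of y] sum.remove[OF finite n, of "\<lambda>j. cadjoint (T j) (T j y)"]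
    unfolding H_def sqrt_complement_square[OF positive_contraction] by (metis add_diff_cancel_left')
  have "cinner (H x) (H y) = cinner x (H (H y))"
    using positive_op_hermitian[OF positive_op_sqrt_complement[OF positive_contraction]]
    by (simp add: H_def hermitian_def)
  also have "\<dots> = (\<Sum>j\<in>J - {n}. cinner (T j x) (T j y))"
    unfolding HH by (rule cinner_sum_cadjoint) (simp add: bounded)
  finally show ?thesis ..
qed

lemma dominated_sqrt_complement:
  assumes "j \<in> J - {n}"
  shows "dominated (op_sqrt (\<lambda>x. x - cadjoint (T n) (T n x))) (T j)"
proof (rule dominated_if_sum_cinner_eq[OF _ assms _ _ sum_cinner_eq_sqrt_complement])
  show "bounded_clinear (op_sqrt (\<lambda>x. x - cadjoint (T n) (T n x)))"
    by (rule positive_op_bounded_clinear[OF positive_op_sqrt_complement[OF positive_contraction]])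
qed (use assms finite bounded in simp_all)

end

section \<open>Von Neumann algebras\<close>

context
  fixes R :: "('a::chilbert_space \<Rightarrow> 'a) set"
  assumes R: "von_neumann_algebra R"
begin

lemma von_neumann_algebra_bounded_clinear: "X \<in> R \<Longrightarrow> bounded_clinear X"
  using R by (auto simp: von_neumann_algebra_def)

lemma von_neumann_algebra_cadjoint: "X \<in> R \<Longrightarrow> cadjoint X \<in> R"
  using R by (simp add: von_neumann_algebra_def)

lemma von_neumann_algebra_compose: "X \<in> R \<Longrightarrow> Y \<in> R \<Longrightarrow> (\<lambda>x. X (Y x)) \<in> R"
  using R by (simp add: von_neumann_algebra_def comp_def)

lemma commutant_commute: "A \<in> commutant R \<Longrightarrow> X \<in> R \<Longrightarrow> A (X x) = X (A x)"
  by (auto simp: commutant_def fun_eq_iff)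

lemma von_neumann_algebra_memI:
  assumes "bounded_clinear X" and "\<And>A x. A \<in> commutant R \<Longrightarrow> X (A x) = A (X x)"
  shows "X \<in> R"
proof -
  have "X \<in> commutant (commutant R)" using assms by (simp add: commutant_def fun_eq_iff)
  with R show ?thesis by (simp add: von_neumann_algebra_def)
qed

lemma commutant_cadjoint:
  assumes A: "A \<in> commutant R"
  shows "cadjoint A \<in> commutant R"
proof -
  have Ab: "bounded_clinear A" using A by (simp add: commutant_def)
  have "cadjoint A (X u) = X (cadjoint A u)" if X: "X \<in> R" for X u
  proof (rule ext_cinner_left)
    fix v
    have Xb: "bounded_clinear X" by (rule von_neumann_algebra_bounded_clinear[OF X])
    have "cinner (cadjoint A (X u)) v = cinner u (cadjoint X (A v))"
      by (simp add: cinner_cadjoint_left[OF Ab] cinner_cadjoint_right[OF Xb])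
    also have "cadjoint X (A v) = A (cadjoint X v)"
      by (rule commutant_commute[OF A von_neumann_algebra_cadjoint[OF X], symmetric])
    also have "cinner u (A (cadjoint X v)) = cinner (X (cadjoint A u)) v"
      by (simp flip: cinner_cadjoint_left[OF Ab] add: cinner_cadjoint_right[OF Xb])
    finally show "cinner (cadjoint A (X u)) v = cinner (X (cadjoint A u)) v" .
  qed
  then show ?thesis by (simp add: commutant_def fun_eq_iff bounded_clinear_cadjoint[OF Ab])
qed

lemma op_sqrt_complement_mem:
  assumes "B \<in> R" and B: "positive_contraction B"
  shows "op_sqrt (\<lambda>x. x - B x) \<in> R"
proof (rule von_neumann_algebra_memI)
  show "bounded_clinear (op_sqrt (\<lambda>x. x - B x))"
    by (rule positive_op_bounded_clinear[OF positive_op_sqrt_complement[OF B]])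
  show "op_sqrt (\<lambda>x. x - B x) (A x) = A (op_sqrt (\<lambda>x. x - B x) x)" if A: "A \<in> commutant R" for A x
  proof -
    have "bounded_clinear A" using A by (simp add: commutant_def)
    moreover have "A (B y) = B (A y)" for y by (rule commutant_commute[OF A \<open>B \<in> R\<close>])
    ultimately show ?thesis by (rule sqrt_complement_commute[OF B, symmetric])
  qed
qed

lemma dominated_factor_mem:
  assumes "H \<in> R" and "F \<in> R" and HF: "dominated H F"
  shows "dominated_factor H F \<in> R"
proof (rule von_neumann_algebra_memI)
  show "bounded_clinear (dominated_factor H F)"
    by (rule dominated.bounded_clinear_dominated_factor[OF HF])
  show "dominated_factor H F (A x) = A (dominated_factor H F x)" if A: "A \<in> commutant R" for A x
    using assms(1,2) commutant_commute[OF A] commutant_commute[OF commutant_cadjoint[OF A]] A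
    by (intro dominated.dominated_factor_commute[OF HF, where A=A]) (simp_all add: commutant_def)
qed

end

theorem lemma3p20:
  fixes R :: "('a::chilbert_space \<Rightarrow> 'a) set"
    and T :: "nat \<Rightarrow> 'a \<Rightarrow> 'a"
    and n :: nat
  assumes "von_neumann_algebra R"
    and "n \<ge> 2"
    and "\<forall>i\<in>{1..n}. T i \<in> R"
    and "(\<lambda>x. \<Sum>i=1..n. cadjoint (T i) (T i x)) = id"
  shows "\<exists>S :: nat \<Rightarrow> 'a \<Rightarrow> 'a.
           (\<forall>i\<in>{1..n-1}. S i \<in> R) \<and>
           (\<forall>i\<in>{1..n-1}. T i = S i \<circ> op_sqrt (\<lambda>x. x - cadjoint (T n) (T n x))) \<and>
           (\<lambda>x. \<Sum>i=1..n-1. cadjoint (S i) (S i x))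
             = range_proj (op_sqrt (\<lambda>x. x - cadjoint (T n) (T n x)))"
proof -
  note R = assms(1)
  define H where "H = op_sqrt (\<lambda>x. x - cadjoint (T n) (T n x))"
  interpret partition_of_identity T "{1..n}" n
    using assms(2-4) von_neumann_algebra_bounded_clinear[OF R] by unfold_locales (auto simp: fun_eq_iff)
  have I: "{1..n} - {n} = {1..n-1}" using assms(2) by auto
  have "(\<lambda>x. cadjoint (T n) (T n x)) \<in> R"
    using assms(2,3) by (simp add: von_neumann_algebra_compose[OF R] von_neumann_algebra_cadjoint[OF R])
  then have "H \<in> R" unfolding H_def by (rule op_sqrt_complement_mem[OF R _ positive_contraction])
  then have "bounded_clinear H" by (rule von_neumann_algebra_bounded_clinear[OF R])
  note dom = dominated_sqrt_complement[unfolded I, folded H_def]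
  define S where "S i = dominated_factor H (T i)" for i
  show ?thesis
    unfolding H_def[symmetric]
  proof (intro exI[of _ S] conjI ballI)
    show "S i \<in> R" if "i \<in> {1..n-1}" for i
      unfolding S_def using that assms(3) by (intro dominated_factor_mem[OF R \<open>H \<in> R\<close> _ dom]) auto
    show "T i = S i \<circ> H" if "i \<in> {1..n-1}" for i
      unfolding S_def by (rule dominated.dominated_factor_comp[OF dom[OF that]])
    show "(\<lambda>x. \<Sum>i=1..n-1. cadjoint (S i) (S i x)) = range_proj H"
      unfolding S_def range_proj_eq_orth_proj[OF \<open>bounded_clinear H\<close>]
      by (rule sum_cadjoint_dominated_factor[OF \<open>bounded_clinear H\<close> dom
            sum_cinner_eq_sqrt_complement[unfolded I, folded H_def]])
  qed
qed

end
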